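(* Let $G$ be a layered ADT network with source $S$ in layer $1$, in which every supernode has exactly $n$ input ports and $n$ output ports. Let $R=\min_{T\in\mathcal T}\mathrm{mincut}(S,T)$. Let $1\le l\le\lambda-1$, and let $W'$ be a regular set consisting of $R$ input ports of supernodes at layer $l+1$. Then there is a regular set $W$ consisting of $R$ output ports of supernodes at layer $l$ such that the $R\times R$ incidence matrix $G_{(W,W')}$ is full rank.
   Context: Layered ADT network. $G$ is a directed acyclic network of supernodes arranged in layers $1,\dots,\lambda$. All links go from output ports of supernodes at layer $l$ to input ports of supernodes at layer $l+1$, and the source $S$ is at layer $1$. Each supernode $V$ has $n$ input ports and $n$ output ports, and symbols lie in a finite field $\mathbb F_q$. An output port sends the same symbol on all its outgoing edges, and an input port receives the $\mathbb F_q$-sum of its incoming symbols. For supernodes $S,T$, $\mathrm{mincut}(S,T)=\min_\Omega\mathrm{rank}(G_\Omega)$, with the minimum over partitions $\Omega\cup\Omega^c$ of the supernodes with $S\in\Omega$ and $T\in\Omega^c$. $G_\Omega$ is the $0$-$1$ incidence matrix of the edges from output ports in $\Omega$ to input ports in $\Omega^c$. $\mathcal T$ is the set of destination supernodes and $R=\min_{T\in\mathcal T}\mathrm{mincut}(S,T)$. Virtual sink and regular sets. Let $W$ be a set of $R$ ports of supernodes in a single layer such that, for each supernode $V$, $W$ contains either a subset of $O(V)$, or a subset of $I(V)$, or no ports of $V$. The virtual sink $T(W)$ is a new supernode, attached as follows. - Each output port in $W$ is connected by one edge to a distinct input port of $T(W)$. - If $W$ contains $p$ input ports of a supernode $V$,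 all input ports of $V$ not in $W$ are disconnected, and the $p$ upper (first) output ports of $V$ are each connected to a distinct input port of $T(W)$. $W$ is called regular if $\mathrm{mincut}(S,T(W))=R$ in the resulting network. For a set $W$ of $R$ output ports at layer $l$ and a set $W'$ of $R$ input ports at layer $l+1$, $G_{(W,W')}$ is the $R\times R$ $0$-$1$ matrix whose $(w',w)$ entry is $1$ iff there is an edge from $w$ to $w'$. Full rank is taken over $\mathbb F_q$. *)

theory Defs
  imports Main
begin

text \<open>In the edge relation of a network,
a port is encoded as a pair (node, index); an edge \<open>((a,i),(b,j))\<close> goes from output
port \<open>i\<close> of \<open>a\<close> to input port \<open>j\<close> of \<open>b\<close>.\<close>

datatype 'v port = OutP 'v nat | InP 'v nat

fun port_node :: "'v port \<Rightarrow> 'v" where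
  "port_node (OutP v i) = v"
| "port_node (InP v j) = v"

definition indep_cols :: "'r set \<Rightarrow> 'c set \<Rightarrow> ('r \<Rightarrow> 'c \<Rightarrow> 'a::field) \<Rightarrow> bool" where
  "indep_cols A C M \<longleftrightarrow>
     (\<forall>c. (\<forall>r\<in>A. (\<Sum>b\<in>C. c b * M r b) = 0) \<longrightarrow> (\<forall>b\<in>C. c b = 0))"

definition rank_mat :: "'r set \<Rightarrow> 'c set \<Rightarrow> ('r \<Rightarrow> 'c \<Rightarrow> 'a::field) \<Rightarrow> nat" where
  "rank_mat A B M = Max {card C | C. C \<subseteq> B \<and> indep_cols A C M}"

text \<open>Rows are the input ports of \<open>N - \<Omega>\<close> and columns the output ports of \<open>\<Omega>\<close>; we only
list the ports incident to such an edge (the other rows/columns are zero and do not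
affect the rank).\<close>

definition cut_rank ::
  "'a::field itself \<Rightarrow> (('n \<times> 'q) \<times> ('n \<times> 'q)) set \<Rightarrow> 'n set \<Rightarrow> 'n set \<Rightarrow> nat" where
  "cut_rank F E N \<Omega> =
     rank_mat
       {q. \<exists>p. (p, q) \<in> E \<and> fst p \<in> \<Omega> \<and> fst q \<in> N - \<Omega>}
       {p. \<exists>q. (p, q) \<in> E \<and> fst p \<in> \<Omega> \<and> fst q \<in> N - \<Omega>}
       (\<lambda>q p. if (p, q) \<in> E then (1::'a) else 0)"

definition mincut ::
  "'a::field itself \<Rightarrow> 'n set \<Rightarrow> (('n \<times> 'q) \<times> ('n \<times> 'q)) set \<Rightarrow> 'n \<Rightarrow> 'n \<Rightarrow> nat" where
  "mincut F N E S T = Min {cut_rank F E N \<Omega> | \<Omega>. \<Omega> \<subseteq> N \<and> S \<in> \<Omega> \<and> T \<in> N - \<Omega>}"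

definition layered_adt_network ::
  "'v set \<Rightarrow> (('v \<times> nat) \<times> ('v \<times> nat)) set \<Rightarrow> nat \<Rightarrow> ('v \<Rightarrow> nat) \<Rightarrow> nat \<Rightarrow> 'v \<Rightarrow> bool" where
  "layered_adt_network V E n layer lam S \<longleftrightarrow>
     finite V \<and> S \<in> V \<and> layer S = 1 \<and>
     (\<forall>v\<in>V. 1 \<le> layer v \<and> layer v \<le> lam) \<and>
     (\<forall>a i b j. ((a, i), (b, j)) \<in> E \<longrightarrow>
        a \<in> V \<and> b \<in> V \<and> i < n \<and> j < n \<and> layer b = Suc (layer a))"

definition min_rate ::
  "'a::field itself \<Rightarrow> 'v set \<Rightarrow> (('v \<times> nat) \<times> ('v \<times> nat)) set \<Rightarrow> 'v \<Rightarrow> 'v set \<Rightarrow> nat" where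
  "min_rate F V E S \<T> = Min {mincut F V E S T | T. T \<in> \<T>}"

definition admissible_ports ::
  "'v set \<Rightarrow> nat \<Rightarrow> ('v \<Rightarrow> nat) \<Rightarrow> 'v port set \<Rightarrow> bool" where
  "admissible_ports V n layer W \<longleftrightarrow>
     finite W \<and>
     (\<forall>v i. OutP v i \<in> W \<longrightarrow> v \<in> V \<and> i < n) \<and>
     (\<forall>v j. InP v j \<in> W \<longrightarrow> v \<in> V \<and> j < n) \<and>
     (\<exists>l. \<forall>w\<in>W. layer (port_node w) = l) \<and>
     \<not> (\<exists>v i j. OutP v i \<in> W \<and> InP v j \<in> W)"

text \<open>The network with the virtual sink \<open>T(W)\<close> attached. Supernodes become
\<open>Some v\<close>, the virtual sink is \<open>None\<close>. Port indices become \<open>Inr i\<close> for the ports of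
original supernodes, and the input port of \<open>T(W)\<close> associated with \<open>w \<in> W\<close> is
\<open>Inl w\<close> (so distinct elements of \<open>W\<close> use distinct input ports of \<open>T(W)\<close>).
If \<open>W\<close> contains \<open>p\<close> input ports of \<open>v\<close>, the input ports of \<open>v\<close> not in \<open>W\<close> are
disconnected, and the \<open>k\<close>-th smallest input port of \<open>v\<close> in \<open>W\<close> is matched with
output port \<open>k\<close> of \<open>v\<close> (\<open>k < p\<close>, the \<open>p\<close> upper output ports), which is connected to the
corresponding input port of \<open>T(W)\<close>.\<close>

definition vsink_edges ::
  "(('v \<times> nat) \<times> ('v \<times> nat)) set \<Rightarrow> 'v port set \<Rightarrow>
   (('v option \<times> ('v port + nat)) \<times> ('v option \<times> ('v port + nat))) set" where
  "vsink_edges E W =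
     {((Some a, Inr i), (Some b, Inr j)) | a i b j.
        ((a, i), (b, j)) \<in> E \<and> \<not> ((\<exists>j'. InP b j' \<in> W) \<and> InP b j \<notin> W)}
   \<union> {((Some v, Inr i), (None, Inl (OutP v i))) | v i. OutP v i \<in> W}
   \<union> {((Some v, Inr (card {j'. InP v j' \<in> W \<and> j' < j})), (None, Inl (InP v j))) | v j.
        InP v j \<in> W}"

definition regular ::
  "'a::field itself \<Rightarrow> 'v set \<Rightarrow> (('v \<times> nat) \<times> ('v \<times> nat)) set \<Rightarrow> nat \<Rightarrow> ('v \<Rightarrow> nat) \<Rightarrow>
   'v \<Rightarrow> nat \<Rightarrow> 'v port set \<Rightarrow> bool" where
  "regular F V E n layer S R W \<longleftrightarrow>
     admissible_ports V n layer W \<and> card W = R \<and>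
     mincut F (insert None (Some ` V)) (vsink_edges E W) (Some S) None = R"

fun port_inc ::
  "'a::field itself \<Rightarrow> (('v \<times> nat) \<times> ('v \<times> nat)) set \<Rightarrow> 'v port \<Rightarrow> 'v port \<Rightarrow> 'a" where
  "port_inc F E (InP b j) (OutP a i) = (if ((a, i), (b, j)) \<in> E then 1 else 0)"
| "port_inc F E _ _ = 0"

end

theory Submission
  imports Defs "HOL-Library.FuncSet" "HOL-Library.Function_Algebras"
begin

text \<open>Let \<open>P\<close> be the output ports at layer \<open>l\<close>. Two matroids live on \<open>P\<close>. In the first, the rank of
  \<open>X \<subseteq> P\<close> is the min-cut from \<open>S\<close> to the virtual sink \<open>T(X)\<close> over the cuts containing all later
  layers, and a set of size and rank \<open>R\<close> is regular. In the second, the rank of \<open>X\<close> is the rank of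
  the columns \<open>X\<close> of the incidence matrix with rows \<open>W'\<close>. Regularity of \<open>W'\<close> gives, for each such
  cut \<open>\<Omega>\<close>, that \<open>R\<close> is at most the cost of \<open>\<Omega>\<close> plus the rank of the columns of the ports of \<open>P\<close>
  inside \<open>\<Omega>\<close>. Submodularity of matrix rank turns this into the hypothesis of Edmonds' matroid
  intersection theorem for \<open>k = R\<close>, and a common independent set of size \<open>R\<close> is the required \<open>W\<close>.
  Submodularity of the rank of a matrix over a finite field is proved by counting null spaces.\<close>

section \<open>Rank of matrices with arbitrary index sets\<close>

lemma rank_mat_values_finite:
  assumes "finite B"
  shows "finite {card C | C. C \<subseteq> B \<and> indep_cols A C M}"
proof -
  have "{card C | C. C \<subseteq> B \<and> indep_cols A C M} \<subseteq> card ` Pow B" by auto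
  then show ?thesis using assms finite_subset by blast
qed

lemma indep_cols_empty: "indep_cols A {} M"
  unfolding indep_cols_def by simp

lemma card_le_rank_mat:
  assumes "finite B" "C \<subseteq> B" "indep_cols A C M"
  shows "card C \<le> rank_mat A B M"
  unfolding rank_mat_def using assms rank_mat_values_finite[OF assms(1)]
  by (intro Max_ge) auto

lemma rank_mat_witness:
  assumes "finite B"
  obtains C where "C \<subseteq> B" "indep_cols A C M" "card C = rank_mat A B M"
proof -
  have "{card C | C. C \<subseteq> B \<and> indep_cols A C M} \<noteq> {}"
    using indep_cols_empty by blast
  then have "rank_mat A B M \<in> {card C | C. C \<subseteq> B \<and> indep_cols A C M}"
    unfolding rank_mat_def using Max_in[OF rank_mat_values_finite[OF assms]] by blast
  then show ?thesis using that by auto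
qed

lemma rank_mat_le_card:
  assumes "finite B"
  shows "rank_mat A B M \<le> card B"
  by (metis assms card_mono rank_mat_witness)

lemma rank_mat_empty [simp]: "rank_mat A {} M = 0"
  using rank_mat_le_card[of "{}" A M] by simp

lemma indep_cols_mono_rows:
  "A \<subseteq> A' \<Longrightarrow> indep_cols A C M \<Longrightarrow> indep_cols A' C M"
  unfolding indep_cols_def by blast

lemma rank_mat_mono:
  assumes "A \<subseteq> A'" "B \<subseteq> B'" "finite B'"
  shows "rank_mat A B M \<le> rank_mat A' B' M"
proof -
  obtain C where C: "C \<subseteq> B" "indep_cols A C M" "card C = rank_mat A B M"
    using rank_mat_witness[OF finite_subset[OF assms(2,3)]] .
  have "indep_cols A' C M"
    using assms(1) C(2) by (rule indep_cols_mono_rows)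
  then have "card C \<le> rank_mat A' B' M"
    using C(1) assms(2,3) by (intro card_le_rank_mat) auto
  then show ?thesis
    using C(3) by simp
qed

lemma indep_cols_cong:
  assumes "\<forall>r\<in>A. \<forall>b\<in>C. M r b = M' r b"
  shows "indep_cols A C M = indep_cols A C M'"
proof -
  have "r \<in> A \<Longrightarrow> (\<Sum>b\<in>C. c b * M r b) = (\<Sum>b\<in>C. c b * M' r b)" for c r
    using assms by (intro sum.cong) auto
  then show ?thesis
    unfolding indep_cols_def by simp
qed

lemma rank_mat_cong:
  assumes "\<forall>r\<in>A. \<forall>b\<in>B. M r b = M' r b"
  shows "rank_mat A B M = rank_mat A B M'"
proof -
  have "C \<subseteq> B \<Longrightarrow> indep_cols A C M = indep_cols A C M'" for C
    using assms by (intro indep_cols_cong) blast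
  then have "{card C | C. C \<subseteq> B \<and> indep_cols A C M} = {card C | C. C \<subseteq> B \<and> indep_cols A C M'}"
    by blast
  then show ?thesis
    unfolding rank_mat_def by simp
qed

lemma indep_cols_reindex:
  assumes "inj_on g C"
  shows "indep_cols (f ` A) (g ` C) M = indep_cols A C (\<lambda>r b. M (f r) (g b))"
proof
  assume h: "indep_cols (f ` A) (g ` C) M"
  show "indep_cols A C (\<lambda>r b. M (f r) (g b))"
    unfolding indep_cols_def
  proof (intro allI impI)
    fix c assume hc: "\<forall>r\<in>A. (\<Sum>b\<in>C. c b * M (f r) (g b)) = 0"
    define c' where "c' = c \<circ> inv_into C g"
    have "(\<Sum>b\<in>g ` C. c' b * M (f r) b) = (\<Sum>b\<in>C. c b * M (f r) (g b))" for r
      using assms by (simp add: sum.reindex c'_def)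
    then have "\<forall>r\<in>f ` A. (\<Sum>b\<in>g ` C. c' b * M r b) = 0"
      using hc by simp
    then have "\<forall>b\<in>g ` C. c' b = 0"
      using h unfolding indep_cols_def by blast
    then show "\<forall>b\<in>C. c b = 0"
      using assms by (auto simp: c'_def)
  qed
next
  assume h: "indep_cols A C (\<lambda>r b. M (f r) (g b))"
  show "indep_cols (f ` A) (g ` C) M"
    unfolding indep_cols_def
  proof (intro allI impI)
    fix c assume hc: "\<forall>r\<in>f ` A. (\<Sum>b\<in>g ` C. c b * M r b) = 0"
    have "(\<Sum>b\<in>g ` C. c b * M (f r) b) = (\<Sum>b\<in>C. (c \<circ> g) b * M (f r) (g b))" for r
      using assms by (simp add: sum.reindex)
    then have "\<forall>r\<in>A. (\<Sum>b\<in>C. (c \<circ> g) b * M (f r) (g b)) = 0"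
      using hc by simp
    then have "\<forall>b\<in>C. (c \<circ> g) b = 0"
      using h unfolding indep_cols_def by blast
    then show "\<forall>b\<in>g ` C. c b = 0" by auto
  qed
qed

lemma rank_mat_reindex:
  assumes "inj_on g B"
  shows "rank_mat (f ` A) (g ` B) M = rank_mat A B (\<lambda>r b. M (f r) (g b))"
proof -
  have "{card C | C. C \<subseteq> g ` B \<and> indep_cols (f ` A) C M}
      = {card C | C. C \<subseteq> B \<and> indep_cols A C (\<lambda>r b. M (f r) (g b))}"
  proof (intro set_eqI iffI; elim CollectE exE conjE)
    fix x C assume C: "x = card C" "C \<subseteq> g ` B" "indep_cols (f ` A) C M"
    obtain D where D: "D \<subseteq> B" "C = g ` D"
      using C(2) by (meson subset_imageE)
    have "inj_on g D" using assms D(1) by (rule inj_on_subset)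
    then have "x = card D" "indep_cols A D (\<lambda>r b. M (f r) (g b))"
      using C D by (simp_all add: card_image indep_cols_reindex)
    then show "x \<in> {card C | C. C \<subseteq> B \<and> indep_cols A C (\<lambda>r b. M (f r) (g b))}"
      using D(1) by blast
  next
    fix x D assume D: "x = card D" "D \<subseteq> B" "indep_cols A D (\<lambda>r b. M (f r) (g b))"
    have "inj_on g D" using assms D(2) by (rule inj_on_subset)
    then have "x = card (g ` D)" "indep_cols (f ` A) (g ` D) M"
      using D by (simp_all add: card_image indep_cols_reindex)
    then show "x \<in> {card C | C. C \<subseteq> g ` B \<and> indep_cols (f ` A) C M}"
      using D(2) by blast
  qed
  then show ?thesis
    unfolding rank_mat_def by simp
qed

lemma indep_cols_zero_rows:
  assumes "A \<subseteq> A'" "\<forall>r\<in>A' - A. \<forall>b\<in>C. M r b = 0"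
  shows "indep_cols A' C M = indep_cols A C M"
proof -
  have "r \<in> A' - A \<Longrightarrow> (\<Sum>b\<in>C. c b * M r b) = 0" for c r
    using assms(2) by simp
  then have "(\<forall>r\<in>A'. (\<Sum>b\<in>C. c b * M r b) = 0) \<longleftrightarrow> (\<forall>r\<in>A. (\<Sum>b\<in>C. c b * M r b) = 0)" for c
    using assms(1) by blast
  then show ?thesis
    unfolding indep_cols_def by simp
qed

lemma rank_mat_zero_rows:
  assumes "A \<subseteq> A'" "\<forall>r\<in>A' - A. \<forall>b\<in>B. M r b = 0"
  shows "rank_mat A' B M = rank_mat A B M"
proof -
  have "C \<subseteq> B \<Longrightarrow> indep_cols A' C M = indep_cols A C M" for C
    using assms(2) by (intro indep_cols_zero_rows[OF assms(1)]) blast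
  then have "{card C | C. C \<subseteq> B \<and> indep_cols A' C M} = {card C | C. C \<subseteq> B \<and> indep_cols A C M}"
    by blast
  then show ?thesis
    unfolding rank_mat_def by simp
qed

lemma indep_cols_no_zero_col:
  fixes M :: "'r \<Rightarrow> 'c \<Rightarrow> 'a::field"
  assumes "indep_cols A C M" "b \<in> C" "finite C"
  shows "\<exists>r\<in>A. M r b \<noteq> 0"
proof (rule ccontr)
  assume zero: "\<not> ?thesis"
  define c :: "'c \<Rightarrow> 'a" where "c x = (if x = b then 1 else 0)" for x
  have "(\<Sum>x\<in>C. c x * M r x) = (\<Sum>x\<in>C. if x = b then M r b else 0)" for r
    by (intro sum.cong) (auto simp: c_def)
  then have "\<forall>r\<in>A. (\<Sum>x\<in>C. c x * M r x) = 0"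
    using zero assms(2,3) by simp
  then have "c b = 0"
    using assms(1,2) unfolding indep_cols_def by blast
  then show False
    by (simp add: c_def)
qed

lemma rank_mat_zero_cols:
  assumes "B \<subseteq> B'" "finite B'" "\<forall>r\<in>A. \<forall>b\<in>B' - B. M r b = 0"
  shows "rank_mat A B' M = rank_mat A B M"
proof (rule antisym)
  obtain C where C: "C \<subseteq> B'" "indep_cols A C M" "card C = rank_mat A B' M"
    using rank_mat_witness[OF assms(2)] .
  have "C \<subseteq> B"
  proof
    fix b assume "b \<in> C"
    then obtain r where "r \<in> A" "M r b \<noteq> 0"
      using indep_cols_no_zero_col[OF C(2) _ finite_subset[OF C(1) assms(2)]] by blast
    then show "b \<in> B"
      using assms(3) C(1) \<open>b \<in> C\<close> by blast
  qed
  then have "card C \<le> rank_mat A B M"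
    using C(2) assms(1,2) by (intro card_le_rank_mat[OF finite_subset]) auto
  then show "rank_mat A B' M \<le> rank_mat A B M"
    using C(3) by simp
  show "rank_mat A B M \<le> rank_mat A B' M"
    using assms(1,2) by (intro rank_mat_mono) auto
qed

lemma indep_cols_restrict_block:
  assumes "indep_cols (A \<union> A') C M" "finite C" "\<forall>r\<in>A' - A. \<forall>b\<in>C \<inter> B. M r b = 0"
  shows "indep_cols A (C \<inter> B) M"
  unfolding indep_cols_def
proof (intro allI impI)
  fix c assume hc: "\<forall>r\<in>A. (\<Sum>b\<in>C \<inter> B. c b * M r b) = 0"
  define c' where "c' b = (if b \<in> B then c b else 0)" for b
  have restrict: "(\<Sum>b\<in>C. c' b * M r b) = (\<Sum>b\<in>C \<inter> B. c b * M r b)" for r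
  proof -
    have "(\<Sum>b\<in>C. c' b * M r b) = (\<Sum>b\<in>C \<inter> B. c' b * M r b)"
      using assms(2) by (intro sum.mono_neutral_right) (auto simp: c'_def)
    then show ?thesis
      by (simp add: c'_def)
  qed
  have "(\<Sum>b\<in>C. c' b * M r b) = 0" if "r \<in> A \<union> A'" for r
  proof (cases "r \<in> A")
    case False
    then show ?thesis
      using assms(3) that by (simp add: restrict)
  qed (simp add: restrict hc)
  then have "\<forall>r\<in>A \<union> A'. (\<Sum>b\<in>C. c' b * M r b) = 0"
    by blast
  then have "\<forall>b\<in>C. c' b = 0"
    using assms(1) unfolding indep_cols_def by blast
  then show "\<forall>b\<in>C \<inter> B. c b = 0"
    by (auto simp: c'_def)
qed

lemma rank_mat_block_le:
  assumes "finite B1" "finite B2" "B1 \<inter> B2 = {}"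
    and blocks: "\<forall>r\<in>A1 \<union> A2. \<forall>b\<in>B1 \<union> B2. M r b \<noteq> 0 \<longrightarrow> (r \<in> A1 \<and> b \<in> B1) \<or> (r \<in> A2 \<and> b \<in> B2)"
  shows "rank_mat (A1 \<union> A2) (B1 \<union> B2) M \<le> rank_mat A1 B1 M + rank_mat A2 B2 M"
proof -
  obtain C where C: "C \<subseteq> B1 \<union> B2" "indep_cols (A1 \<union> A2) C M"
      "card C = rank_mat (A1 \<union> A2) (B1 \<union> B2) M"
    using rank_mat_witness[of "B1 \<union> B2"] assms(1,2) by blast
  have fC: "finite C"
    using C(1) assms(1,2) finite_subset by auto
  have z1: "\<forall>r\<in>A2 - A1. \<forall>b\<in>C \<inter> B1. M r b = 0"
    using blocks assms(3) C(1) by blast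
  have z2: "\<forall>r\<in>A1 - A2. \<forall>b\<in>C \<inter> B2. M r b = 0"
    using blocks assms(3) C(1) by blast
  have "indep_cols A1 (C \<inter> B1) M"
    by (rule indep_cols_restrict_block[OF C(2) fC z1])
  moreover have "indep_cols A2 (C \<inter> B2) M"
    using C(2) by (intro indep_cols_restrict_block[OF _ fC z2]) (simp add: Un_commute)
  ultimately have "card (C \<inter> B1) + card (C \<inter> B2) \<le> rank_mat A1 B1 M + rank_mat A2 B2 M"
    using assms(1,2) by (intro add_mono card_le_rank_mat) auto
  moreover have "C = (C \<inter> B1) \<union> (C \<inter> B2)"
    using C(1) by blast
  then have "card C \<le> card (C \<inter> B1) + card (C \<inter> B2)"
    by (metis card_Un_le)
  ultimately show ?thesis
    using C(3) by simp
qed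

lemma rank_mat_block_ge:
  assumes "finite B1" "finite B2" "B1 \<inter> B2 = {}"
    and z1: "\<forall>r\<in>A1. \<forall>b\<in>B2. M r b = 0" and z2: "\<forall>r\<in>A2. \<forall>b\<in>B1. M r b = 0"
  shows "rank_mat A1 B1 M + rank_mat A2 B2 M \<le> rank_mat (A1 \<union> A2) (B1 \<union> B2) M"
proof -
  obtain C1 where C1: "C1 \<subseteq> B1" "indep_cols A1 C1 M" "card C1 = rank_mat A1 B1 M"
    using rank_mat_witness[OF assms(1)] .
  obtain C2 where C2: "C2 \<subseteq> B2" "indep_cols A2 C2 M" "card C2 = rank_mat A2 B2 M"
    using rank_mat_witness[OF assms(2)] .
  have f1: "finite C1" and f2: "finite C2"
    using C1(1) C2(1) assms(1,2) finite_subset by auto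
  have dj: "C1 \<inter> C2 = {}"
    using C1(1) C2(1) assms(3) by blast
  have "indep_cols (A1 \<union> A2) (C1 \<union> C2) M"
    unfolding indep_cols_def
  proof (intro allI impI)
    fix c assume hc: "\<forall>r\<in>A1 \<union> A2. (\<Sum>b\<in>C1 \<union> C2. c b * M r b) = 0"
    have split: "(\<Sum>b\<in>C1 \<union> C2. c b * M r b) = (\<Sum>b\<in>C1. c b * M r b) + (\<Sum>b\<in>C2. c b * M r b)" for r
      by (rule sum.union_disjoint[OF f1 f2 dj])
    have "r \<in> A1 \<Longrightarrow> (\<Sum>b\<in>C2. c b * M r b) = 0" for r
      using z1 C2(1) by (intro sum.neutral) auto
    then have "\<forall>r\<in>A1. (\<Sum>b\<in>C1. c b * M r b) = 0"
      using hc split by (metis UnI1 add.right_neutral)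
    then have "\<forall>b\<in>C1. c b = 0"
      using C1(2) unfolding indep_cols_def by blast
    moreover have "r \<in> A2 \<Longrightarrow> (\<Sum>b\<in>C1. c b * M r b) = 0" for r
      using z2 C1(1) by (intro sum.neutral) auto
    then have "\<forall>r\<in>A2. (\<Sum>b\<in>C2. c b * M r b) = 0"
      using hc split by (metis UnI2 add_0)
    then have "\<forall>b\<in>C2. c b = 0"
      using C2(2) unfolding indep_cols_def by blast
    ultimately show "\<forall>b\<in>C1 \<union> C2. c b = 0"
      by blast
  qed
  then have "card (C1 \<union> C2) \<le> rank_mat (A1 \<union> A2) (B1 \<union> B2) M"
    using C1(1) C2(1) assms(1,2) by (intro card_le_rank_mat) auto
  then show ?thesis
    using card_Un_disjoint[OF f1 f2 dj] C1(3) C2(3) by simp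
qed

lemma rank_mat_layered_block_eq:
  fixes h g :: "_ \<Rightarrow> nat"
  assumes "finite B1" "finite B2"
    and g: "\<forall>b\<in>B1. g b < l" "\<forall>b\<in>B2. g b = l" and h: "\<forall>r\<in>A1. h r \<le> l" "\<forall>r\<in>A2. h r = Suc l"
    and M: "\<forall>r\<in>A1 \<union> A2. \<forall>b\<in>B1 \<union> B2. M r b \<noteq> 0 \<longrightarrow> h r = Suc (g b)"
  shows "rank_mat (A1 \<union> A2) (B1 \<union> B2) M = rank_mat A1 B1 M + rank_mat A2 B2 M"
proof (rule antisym)
  show "rank_mat (A1 \<union> A2) (B1 \<union> B2) M \<le> rank_mat A1 B1 M + rank_mat A2 B2 M"
  proof (rule rank_mat_block_le[OF assms(1,2)])
    show "B1 \<inter> B2 = {}"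
      using g by fastforce
    show "\<forall>r\<in>A1 \<union> A2. \<forall>b\<in>B1 \<union> B2. M r b \<noteq> 0 \<longrightarrow> r \<in> A1 \<and> b \<in> B1 \<or> r \<in> A2 \<and> b \<in> B2"
    proof (intro ballI impI)
      fix r b assume r: "r \<in> A1 \<union> A2" and b: "b \<in> B1 \<union> B2" and "M r b \<noteq> 0"
      then have hr: "h r = Suc (g b)"
        using M by blast
      show "r \<in> A1 \<and> b \<in> B1 \<or> r \<in> A2 \<and> b \<in> B2"
      proof (cases "b \<in> B1")
        case True
        then have "r \<notin> A2"
          using hr g(1) h(2) by fastforce
        then show ?thesis
          using r True by blast
      next
        case False
        then have "b \<in> B2" "r \<notin> A1"
          using b hr g(2) h(1) by fastforce+
        then show ?thesis
          using r by blast
      qed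
    qed
  qed
  show "rank_mat A1 B1 M + rank_mat A2 B2 M \<le> rank_mat (A1 \<union> A2) (B1 \<union> B2) M"
  proof (rule rank_mat_block_ge[OF assms(1,2)])
    show "B1 \<inter> B2 = {}"
      using g by fastforce
    show "\<forall>r\<in>A1. \<forall>b\<in>B2. M r b = 0"
      using M g(2) h(1) by fastforce
    show "\<forall>r\<in>A2. \<forall>b\<in>B1. M r b = 0"
      using M g(1) h(2) by fastforce
  qed
qed

lemma card_le_rank_mat_unit_rows:
  assumes "finite B" "\<forall>b\<in>B. \<exists>r\<in>A. \<forall>b'\<in>B. M r b' = (if b' = b then 1 else 0)"
  shows "card B \<le> rank_mat A B M"
proof -
  have "indep_cols A B M"
    unfolding indep_cols_def
  proof (intro allI impI ballI)
    fix c b assume hc: "\<forall>r\<in>A. (\<Sum>b\<in>B. c b * M r b) = 0" and b: "b \<in> B"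
    obtain r where r: "r \<in> A" "\<forall>b'\<in>B. M r b' = (if b' = b then 1 else 0)"
      using assms(2) b by blast
    have "(\<Sum>b'\<in>B. c b' * M r b') = (\<Sum>b'\<in>B. if b' = b then c b' else 0)"
      using r(2) by (intro sum.cong) auto
    also have "\<dots> = c b"
      using b assms(1) by simp
    finally show "c b = 0"
      using hc r(1) by simp
  qed
  then show ?thesis
    using card_le_rank_mat[OF assms(1) order_refl] by blast
qed

section \<open>Submodularity of rank over a finite field\<close>

definition supported_on :: "'c set \<Rightarrow> ('c \<Rightarrow> 'a::zero) set" where
  "supported_on B = {x. \<forall>b. b \<notin> B \<longrightarrow> x b = 0}"

definition mat_vec :: "'r set \<Rightarrow> 'c set \<Rightarrow> ('r \<Rightarrow> 'c \<Rightarrow> 'a::field) \<Rightarrow> ('c \<Rightarrow> 'a) \<Rightarrow> 'r \<Rightarrow> 'a" where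
  "mat_vec A B M x = (\<lambda>r. if r \<in> A then (\<Sum>b\<in>B. x b * M r b) else 0)"

definition null_space :: "'r set \<Rightarrow> 'c set \<Rightarrow> ('r \<Rightarrow> 'c \<Rightarrow> 'a::field) \<Rightarrow> ('c \<Rightarrow> 'a) set" where
  "null_space A B M = {x \<in> supported_on B. \<forall>r\<in>A. (\<Sum>b\<in>B. x b * M r b) = 0}"

lemma bij_betw_restrict_supported_on:
  fixes B :: "'c set"
  shows "bij_betw (\<lambda>x. restrict x B) (supported_on B) (B \<rightarrow>\<^sub>E (UNIV :: 'a::zero set))"
proof (rule bij_betwI')
  fix x y :: "'c \<Rightarrow> 'a" assume xy: "x \<in> supported_on B" "y \<in> supported_on B"
  show "(restrict x B = restrict y B) = (x = y)"
  proof
    assume eq: "restrict x B = restrict y B"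
    show "x = y"
    proof
      fix b show "x b = y b"
        using fun_cong[OF eq, of b] xy by (cases "b \<in> B") (auto simp: supported_on_def)
    qed
  qed simp
next
  fix f :: "'c \<Rightarrow> 'a" assume "f \<in> B \<rightarrow>\<^sub>E UNIV"
  then have "f = restrict (\<lambda>b. if b \<in> B then f b else 0) B"
    by (auto simp: restrict_def PiE_def extensional_def)
  moreover have "(\<lambda>b. if b \<in> B then f b else 0) \<in> supported_on B"
    by (simp add: supported_on_def)
  ultimately show "\<exists>x\<in>supported_on B. f = restrict x B"
    by blast
qed simp

lemma finite_supported_on:
  assumes "finite B"
  shows "finite (supported_on B :: ('c \<Rightarrow> 'a::{zero,finite}) set)"
proof -
  have "finite (B \<rightarrow>\<^sub>E (UNIV :: 'a set))"
    using assms by (simp add: finite_PiE)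
  then show ?thesis
    by (rule bij_betw_finite[OF bij_betw_restrict_supported_on, THEN iffD2])
qed

lemma card_supported_on:
  assumes "finite B"
  shows "card (supported_on B :: ('c \<Rightarrow> 'a::{zero,finite}) set) = card (UNIV :: 'a set) ^ card B"
proof -
  have "card (supported_on B :: ('c \<Rightarrow> 'a) set) = card (B \<rightarrow>\<^sub>E (UNIV :: 'a set))"
    by (rule bij_betw_same_card[OF bij_betw_restrict_supported_on])
  also have "\<dots> = card (UNIV :: 'a set) ^ card B"
    using assms by (simp add: card_PiE)
  finally show ?thesis .
qed

lemma sum_supported_on_subset:
  fixes x :: "'c \<Rightarrow> 'a::semiring_0"
  assumes "x \<in> supported_on C" "C \<subseteq> B" "finite B"
  shows "(\<Sum>b\<in>B. x b * m b) = (\<Sum>b\<in>C. x b * m b)"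
  using assms by (intro sum.mono_neutral_right) (auto simp: supported_on_def)

lemma null_space_diff:
  "x \<in> null_space A B M \<Longrightarrow> y \<in> null_space A B M \<Longrightarrow> x - y \<in> null_space A B M"
  by (simp add: null_space_def supported_on_def left_diff_distrib sum_subtractf)

lemma zero_in_null_space: "0 \<in> null_space A B M"
  by (simp add: null_space_def supported_on_def)

lemma finite_null_space:
  fixes M :: "'r \<Rightarrow> 'c \<Rightarrow> 'a::{field,finite}"
  assumes "finite B"
  shows "finite (null_space A B M)"
proof -
  have "null_space A B M \<subseteq> supported_on B"
    by (auto simp: null_space_def)
  then show ?thesis
    using finite_supported_on[OF assms] by (rule finite_subset)
qed

lemma card_eq_card_image_mult:
  assumes "finite X" "\<forall>y\<in>f ` X. card {x\<in>X. f x = y} = k"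
  shows "card X = card (f ` X) * k"
proof -
  have "card X = card (\<Union>y\<in>f ` X. {x\<in>X. f x = y})"
    by (rule arg_cong[of _ _ card]) blast
  also have "\<dots> = (\<Sum>y\<in>f ` X. card {x\<in>X. f x = y})"
    using assms(1) by (intro card_UN_disjoint) auto
  also have "\<dots> = (\<Sum>y\<in>f ` X. k)"
    using assms(2) by (intro sum.cong) auto
  finally show ?thesis
    by simp
qed

lemma sum_fibre_eq_image_Int:
  fixes H K :: "'b::ab_group_add set"
  assumes cH: "\<forall>x\<in>H. \<forall>y\<in>H. x - y \<in> H" and cK: "\<forall>x\<in>K. \<forall>y\<in>K. x - y \<in> K"
    and hk: "h0 \<in> H" "k0 \<in> K"
  shows "{p \<in> H \<times> K. fst p + snd p = h0 + k0} = (\<lambda>z. (h0 + z, k0 - z)) ` (H \<inter> K)"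
proof (intro set_eqI iffI)
  fix p assume "p \<in> {p \<in> H \<times> K. fst p + snd p = h0 + k0}"
  moreover obtain h k where "p = (h, k)"
    by fastforce
  ultimately have p: "p = (h, k)" "h \<in> H" "k \<in> K" "h + k = h0 + k0"
    by auto
  have "h - h0 = k0 - k"
    using p(4) by (simp add: algebra_simps)
  moreover have "h - h0 \<in> H" "k0 - k \<in> K"
    using cH cK hk p by auto
  ultimately have "h - h0 \<in> H \<inter> K"
    by simp
  moreover have "p = (h0 + (h - h0), k0 - (h - h0))"
    using p(1) \<open>h - h0 = k0 - k\<close> by (simp add: algebra_simps)
  ultimately show "p \<in> (\<lambda>z. (h0 + z, k0 - z)) ` (H \<inter> K)"
    by blast
next
  fix p assume "p \<in> (\<lambda>z. (h0 + z, k0 - z)) ` (H \<inter> K)"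
  then obtain z where z: "z \<in> H" "z \<in> K" "p = (h0 + z, k0 - z)"
    by blast
  have "h0 + z = h0 - ((h0 - h0) - z)"
    by simp
  then have "h0 + z \<in> H"
    using cH hk(1) z(1) by metis
  moreover have "k0 - z \<in> K"
    using cK hk(2) z(2) by blast
  ultimately show "p \<in> {p \<in> H \<times> K. fst p + snd p = h0 + k0}"
    using z(3) by simp
qed

text \<open>The fibres of the sum map \<open>H \<times> K \<rightarrow> H + K\<close> are translates of \<open>H \<inter> K\<close>.\<close>

lemma card_mult_card_eq_card_sum_mult_card_Int:
  fixes H K :: "'b::ab_group_add set"
  assumes fH: "finite H" and fK: "finite K"
    and cH: "\<forall>x\<in>H. \<forall>y\<in>H. x - y \<in> H" and cK: "\<forall>x\<in>K. \<forall>y\<in>K. x - y \<in> K"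
  shows "card H * card K = card {h + k | h k. h \<in> H \<and> k \<in> K} * card (H \<inter> K)"
proof -
  define s where "s p = fst p + snd p" for p :: "'b \<times> 'b"
  have "card {p\<in>H \<times> K. s p = y} = card (H \<inter> K)" if y: "y \<in> s ` (H \<times> K)" for y
  proof -
    obtain h0 k0 where hk: "h0 \<in> H" "k0 \<in> K" "y = h0 + k0"
      using y by (auto simp: s_def)
    then have "{p\<in>H \<times> K. s p = y} = (\<lambda>z. (h0 + z, k0 - z)) ` (H \<inter> K)"
      using sum_fibre_eq_image_Int[OF cH cK hk(1,2)] by (simp add: s_def)
    moreover have "inj_on (\<lambda>z. (h0 + z, k0 - z)) (H \<inter> K)"
      by (rule inj_onI) simp
    ultimately show ?thesis
      by (simp add: card_image)
  qed
  then have "card (H \<times> K) = card (s ` (H \<times> K)) * card (H \<inter> K)"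
    using fH fK by (intro card_eq_card_image_mult) auto
  moreover have "s ` (H \<times> K) = {h + k | h k. h \<in> H \<and> k \<in> K}"
    by (force simp: s_def)
  ultimately show ?thesis
    by (simp add: card_cartesian_product)
qed

lemma mat_vec_eq_iff_diff_in_null_space:
  assumes "x \<in> supported_on B" "y \<in> supported_on B"
  shows "mat_vec A B M x = mat_vec A B M y \<longleftrightarrow> x - y \<in> null_space A B M"
proof -
  have "x - y \<in> supported_on B"
    using assms by (simp add: supported_on_def)
  moreover have "(\<Sum>b\<in>B. (x - y) b * M r b) = (\<Sum>b\<in>B. x b * M r b) - (\<Sum>b\<in>B. y b * M r b)" for r
    by (simp add: left_diff_distrib sum_subtractf)
  ultimately show ?thesis
    unfolding mat_vec_def null_space_def by (auto simp: fun_eq_iff)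
qed

lemma card_supported_on_eq_card_image_mult:
  fixes M :: "'r \<Rightarrow> 'c \<Rightarrow> 'a::{field,finite}"
  assumes "finite B"
  shows "card (supported_on B :: ('c \<Rightarrow> 'a) set)
    = card (mat_vec A B M ` supported_on B) * card (null_space A B M)"
proof (rule card_eq_card_image_mult[OF finite_supported_on[OF assms]], rule ballI)
  fix y assume "y \<in> mat_vec A B M ` supported_on B"
  then obtain x0 where x0: "x0 \<in> supported_on B" "y = mat_vec A B M x0"
    by blast
  have "{x \<in> supported_on B. mat_vec A B M x = y} = (\<lambda>z. x0 + z) ` null_space A B M"
  proof (intro set_eqI iffI)
    fix x assume "x \<in> {x \<in> supported_on B. mat_vec A B M x = y}"
    then have "x - x0 \<in> null_space A B M"
      using x0 mat_vec_eq_iff_diff_in_null_space by blast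
    then show "x \<in> (\<lambda>z. x0 + z) ` null_space A B M"
      by (intro image_eqI[of _ _ "x - x0"]) simp_all
  next
    fix x assume "x \<in> (\<lambda>z. x0 + z) ` null_space A B M"
    then obtain z where z: "z \<in> null_space A B M" "x = x0 + z"
      by blast
    then have "x \<in> supported_on B"
      using x0(1) by (auto simp: null_space_def supported_on_def)
    then show "x \<in> {x \<in> supported_on B. mat_vec A B M x = y}"
      using x0 z mat_vec_eq_iff_diff_in_null_space by fastforce
  qed
  then show "card {x \<in> supported_on B. mat_vec A B M x = y} = card (null_space A B M)"
    by (simp add: card_image)
qed

lemma dependent_col_in_span:
  fixes M :: "'r \<Rightarrow> 'c \<Rightarrow> 'a::field"
  assumes "finite B" "C \<subseteq> B" "indep_cols A C M" "card C = rank_mat A B M" "b \<in> B - C"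
  shows "\<exists>d\<in>supported_on C. \<forall>r\<in>A. M r b = (\<Sum>x\<in>C. d x * M r x)"
proof -
  have fC: "finite C"
    using assms(1,2) finite_subset by blast
  have "\<not> indep_cols A (insert b C) M"
  proof
    assume "indep_cols A (insert b C) M"
    then have "card (insert b C) \<le> rank_mat A B M"
      using assms by (intro card_le_rank_mat) auto
    then show False
      using assms(4,5) fC by simp
  qed
  then obtain c where c: "\<forall>r\<in>A. (\<Sum>x\<in>insert b C. c x * M r x) = 0" "\<exists>x\<in>insert b C. c x \<noteq> 0"
    unfolding indep_cols_def by blast
  have split: "(\<Sum>x\<in>insert b C. c x * M r x) = c b * M r b + (\<Sum>x\<in>C. c x * M r x)" for r
    using assms(5) fC by simp
  have cb: "c b \<noteq> 0"
  proof
    assume "c b = 0"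
    then have "\<forall>r\<in>A. (\<Sum>x\<in>C. c x * M r x) = 0"
      using c(1) split by simp
    then show False
      using assms(3) c(2) \<open>c b = 0\<close> unfolding indep_cols_def by blast
  qed
  define d where "d x = (if x \<in> C then - c x / c b else 0)" for x
  have "M r b = (\<Sum>x\<in>C. d x * M r x)" if "r \<in> A" for r
  proof -
    have "(\<Sum>x\<in>C. d x * M r x) = - (\<Sum>x\<in>C. c x * M r x) / c b"
      by (simp add: d_def sum_divide_distrib sum_negf)
    also have "(\<Sum>x\<in>C. c x * M r x) = - (c b * M r b)"
      using c(1) that split by (simp add: eq_neg_iff_add_eq_0 add.commute)
    finally show ?thesis
      using cb by simp
  qed
  moreover have "d \<in> supported_on C"
    by (simp add: d_def supported_on_def)
  ultimately show ?thesis
    by blast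
qed

lemma image_mat_vec_eq_max_indep:
  fixes M :: "'r \<Rightarrow> 'c \<Rightarrow> 'a::field"
  assumes fB: "finite B" and C: "C \<subseteq> B" "indep_cols A C M" "card C = rank_mat A B M"
  shows "mat_vec A B M ` supported_on B = mat_vec A B M ` supported_on C"
proof
  show "mat_vec A B M ` supported_on C \<subseteq> mat_vec A B M ` supported_on B"
    using C(1) by (auto simp: supported_on_def)
  obtain D where D: "\<forall>b\<in>B - C. D b \<in> supported_on C \<and> (\<forall>r\<in>A. M r b = (\<Sum>c\<in>C. D b c * M r c))"
    using dependent_col_in_span[OF fB C] by metis
  show "mat_vec A B M ` supported_on B \<subseteq> mat_vec A B M ` supported_on C"
  proof
    fix v assume "v \<in> mat_vec A B M ` supported_on B"
    then obtain x where x: "x \<in> supported_on B" "v = mat_vec A B M x"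
      by blast
    define y where "y c = (if c \<in> C then x c + (\<Sum>b\<in>B - C. x b * D b c) else 0)" for c
    have y: "y \<in> supported_on C"
      by (simp add: y_def supported_on_def)
    have "(\<Sum>b\<in>B. y b * M r b) = (\<Sum>b\<in>B. x b * M r b)" if r: "r \<in> A" for r
    proof -
      have "(\<Sum>b\<in>B. y b * M r b) = (\<Sum>c\<in>C. y c * M r c)"
        by (rule sum_supported_on_subset[OF y C(1) fB])
      also have "\<dots> = (\<Sum>c\<in>C. x c * M r c) + (\<Sum>c\<in>C. \<Sum>b\<in>B - C. x b * (D b c * M r c))"
        by (simp add: y_def sum.distrib distrib_right sum_distrib_right mult.assoc)
      also have "(\<Sum>c\<in>C. \<Sum>b\<in>B - C. x b * (D b c * M r c)) = (\<Sum>b\<in>B - C. x b * M r b)"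
        using D r by (subst sum.swap) (simp add: sum_distrib_left[symmetric])
      also have "(\<Sum>c\<in>C. x c * M r c) + (\<Sum>b\<in>B - C. x b * M r b) = (\<Sum>b\<in>B. x b * M r b)"
        using sum.subset_diff[OF C(1) fB, of "\<lambda>b. x b * M r b"] by (simp add: add.commute)
      finally show ?thesis .
    qed
    then have "mat_vec A B M y = v"
      using x(2) by (simp add: mat_vec_def fun_eq_iff)
    then show "v \<in> mat_vec A B M ` supported_on C"
      using y by blast
  qed
qed

lemma inj_on_mat_vec_indep:
  fixes M :: "'r \<Rightarrow> 'c \<Rightarrow> 'a::field"
  assumes "finite B" "C \<subseteq> B" "indep_cols A C M"
  shows "inj_on (mat_vec A B M) (supported_on C)"
proof (rule inj_onI)
  fix x y assume xy: "x \<in> supported_on C" "y \<in> supported_on C"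
    and "mat_vec A B M x = mat_vec A B M y"
  moreover have "supported_on C \<subseteq> supported_on B"
    using assms(2) by (auto simp: supported_on_def)
  ultimately have "x - y \<in> null_space A B M"
    using mat_vec_eq_iff_diff_in_null_space by blast
  moreover have "x - y \<in> supported_on C"
    using xy by (simp add: supported_on_def)
  ultimately have "\<forall>r\<in>A. (\<Sum>b\<in>C. (x - y) b * M r b) = 0"
    using sum_supported_on_subset[OF _ assms(2,1), of "x - y"] by (simp add: null_space_def)
  then have "\<forall>b\<in>C. (x - y) b = 0"
    using assms(3) unfolding indep_cols_def by blast
  then show "x = y"
    using xy by (auto simp: supported_on_def fun_eq_iff)
qed

lemma card_image_mat_vec:
  fixes M :: "'r \<Rightarrow> 'c \<Rightarrow> 'a::{field,finite}"
  assumes "finite B"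
  shows "card (mat_vec A B M ` supported_on B) = card (UNIV :: 'a set) ^ rank_mat A B M"
proof -
  obtain C where C: "C \<subseteq> B" "indep_cols A C M" "card C = rank_mat A B M"
    using rank_mat_witness[OF assms] .
  have "card (mat_vec A B M ` supported_on B) = card (supported_on C :: ('c \<Rightarrow> 'a) set)"
    using image_mat_vec_eq_max_indep[OF assms C] card_image[OF inj_on_mat_vec_indep[OF assms C(1,2)]]
    by simp
  then show ?thesis
    using card_supported_on[OF finite_subset[OF C(1) assms]] C(3) by simp
qed

theorem rank_nullity_card:
  fixes M :: "'r \<Rightarrow> 'c \<Rightarrow> 'a::{field,finite}"
  assumes "finite B"
  shows "card (UNIV :: 'a set) ^ rank_mat A B M * card (null_space A B M) = card (UNIV :: 'a set) ^ card B"
proof -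
  have "card (UNIV :: 'a set) ^ card B = card (supported_on B :: ('c \<Rightarrow> 'a) set)"
    by (rule card_supported_on[OF assms, symmetric])
  also have "\<dots> = card (mat_vec A B M ` supported_on B) * card (null_space A B M)"
    by (rule card_supported_on_eq_card_image_mult[OF assms])
  finally show ?thesis
    using card_image_mat_vec[OF assms, of A M] by simp
qed

lemma null_space_Int_subset:
  fixes M :: "'r \<Rightarrow> 'c \<Rightarrow> 'a::field"
  assumes "finite B1" "finite B2"
  shows "null_space A1 B1 M \<inter> null_space A2 B2 M \<subseteq> null_space (A1 \<union> A2) (B1 \<inter> B2) M"
proof
  fix x assume x: "x \<in> null_space A1 B1 M \<inter> null_space A2 B2 M"
  then have xs: "x \<in> supported_on (B1 \<inter> B2)"
    by (auto simp: null_space_def supported_on_def)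
  have "(\<Sum>b\<in>B1 \<inter> B2. x b * M r b) = 0" if "r \<in> A1 \<union> A2" for r
  proof (cases "r \<in> A1")
    case True
    then show ?thesis
      using x sum_supported_on_subset[OF xs _ assms(1)] by (auto simp: null_space_def)
  next
    case False
    then show ?thesis
      using x that sum_supported_on_subset[OF xs _ assms(2)] by (auto simp: null_space_def)
  qed
  then show "x \<in> null_space (A1 \<union> A2) (B1 \<inter> B2) M"
    using xs by (simp add: null_space_def)
qed

lemma null_space_sum_subset:
  fixes M :: "'r \<Rightarrow> 'c \<Rightarrow> 'a::field"
  assumes "finite B1" "finite B2"
  shows "{h + k | h k. h \<in> null_space A1 B1 M \<and> k \<in> null_space A2 B2 M}
    \<subseteq> null_space (A1 \<inter> A2) (B1 \<union> B2) M"
proof safe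
  fix h k assume h: "h \<in> null_space A1 B1 M" and k: "k \<in> null_space A2 B2 M"
  have hs: "h \<in> supported_on B1" and ks: "k \<in> supported_on B2"
    using h k by (auto simp: null_space_def)
  have fB: "finite (B1 \<union> B2)"
    using assms by simp
  have "(\<Sum>b\<in>B1 \<union> B2. (h + k) b * M r b) = 0" if "r \<in> A1 \<inter> A2" for r
  proof -
    have "(\<Sum>b\<in>B1 \<union> B2. (h + k) b * M r b) = (\<Sum>b\<in>B1 \<union> B2. h b * M r b) + (\<Sum>b\<in>B1 \<union> B2. k b * M r b)"
      by (simp add: distrib_right sum.distrib)
    also have "\<dots> = (\<Sum>b\<in>B1. h b * M r b) + (\<Sum>b\<in>B2. k b * M r b)"
      using sum_supported_on_subset[OF hs _ fB] sum_supported_on_subset[OF ks _ fB] by simp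
    finally show ?thesis
      using h k that by (simp add: null_space_def)
  qed
  moreover have "h + k \<in> supported_on (B1 \<union> B2)"
    using hs ks by (simp add: supported_on_def)
  ultimately show "h + k \<in> null_space (A1 \<inter> A2) (B1 \<union> B2) M"
    by (simp add: null_space_def)
qed

lemma card_null_space_cross_le:
  fixes M :: "'r \<Rightarrow> 'c \<Rightarrow> 'a::{field,finite}"
  assumes f1: "finite B1" and f2: "finite B2"
  shows "card (null_space A1 B1 M) * card (null_space A2 B2 M)
    \<le> card (null_space (A1 \<union> A2) (B1 \<inter> B2) M) * card (null_space (A1 \<inter> A2) (B1 \<union> B2) M)"
proof -
  define K1 K2 where "K1 = null_space A1 B1 M" and "K2 = null_space A2 B2 M"
  have "card K1 * card K2 = card {h + k | h k. h \<in> K1 \<and> k \<in> K2} * card (K1 \<inter> K2)"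
    unfolding K1_def K2_def using f1 f2
    by (intro card_mult_card_eq_card_sum_mult_card_Int finite_null_space) (simp_all add: null_space_diff)
  also have "\<dots> \<le> card (null_space (A1 \<inter> A2) (B1 \<union> B2) M) * card (null_space (A1 \<union> A2) (B1 \<inter> B2) M)"
    using null_space_Int_subset[OF f1 f2, of A1 M A2] null_space_sum_subset[OF f1 f2, of A1 M A2] f1 f2
    unfolding K1_def K2_def by (intro mult_le_mono card_mono finite_null_space) auto
  finally show ?thesis
    unfolding K1_def K2_def by (simp add: mult.commute)
qed

theorem rank_mat_submodular:
  fixes M :: "'r \<Rightarrow> 'c \<Rightarrow> 'a::{field,finite}"
  assumes f1: "finite B1" and f2: "finite B2"
  shows "rank_mat (A1 \<union> A2) (B1 \<inter> B2) M + rank_mat (A1 \<inter> A2) (B1 \<union> B2) M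
         \<le> rank_mat A1 B1 M + rank_mat A2 B2 M"
proof -
  define q where "q = card (UNIV :: 'a set)"
  define K1 K2 K3 K4 where "K1 = null_space A1 B1 M" and "K2 = null_space A2 B2 M"
    and "K3 = null_space (A1 \<union> A2) (B1 \<inter> B2) M" and "K4 = null_space (A1 \<inter> A2) (B1 \<union> B2) M"
  define r1 r2 r3 r4 where "r1 = rank_mat A1 B1 M" and "r2 = rank_mat A2 B2 M"
    and "r3 = rank_mat (A1 \<union> A2) (B1 \<inter> B2) M" and "r4 = rank_mat (A1 \<inter> A2) (B1 \<union> B2) M"
  have f3: "finite (B1 \<inter> B2)" and f4: "finite (B1 \<union> B2)"
    using f1 f2 by auto
  have e1: "q ^ r1 * card K1 = q ^ card B1" and e2: "q ^ r2 * card K2 = q ^ card B2"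
    and e3: "q ^ r3 * card K3 = q ^ card (B1 \<inter> B2)" and e4: "q ^ r4 * card K4 = q ^ card (B1 \<union> B2)"
    unfolding q_def r1_def r2_def r3_def r4_def K1_def K2_def K3_def K4_def
    using f1 f2 f3 f4 by (simp_all add: rank_nullity_card)
  have "q ^ (r3 + r4) * (card K3 * card K4) = q ^ (card B1 + card B2)"
    using e3 e4 card_Un_Int[OF f1 f2] by (simp add: power_add algebra_simps)
  also have "\<dots> = q ^ (r1 + r2) * (card K1 * card K2)"
    using e1 e2 by (simp add: power_add algebra_simps)
  also have "\<dots> \<le> q ^ (r1 + r2) * (card K3 * card K4)"
    using card_null_space_cross_le[OF f1 f2, of A1 M A2] unfolding K1_def K2_def K3_def K4_def by simp
  finally have "q ^ (r3 + r4) * (card K3 * card K4) \<le> q ^ (r1 + r2) * (card K3 * card K4)" .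
  moreover have "0 < card K3 * card K4"
    unfolding K3_def K4_def using f3 f4 zero_in_null_space finite_null_space
    by (metis card_gt_0_iff empty_iff nat_0_less_mult_iff)
  ultimately have "q ^ (r3 + r4) \<le> q ^ (r1 + r2)"
    by (simp only: mult_le_cancel2)
  moreover have "1 < q"
    unfolding q_def using card_mono[of UNIV "{0 :: 'a, 1}"] by simp
  ultimately show ?thesis
    unfolding r1_def r2_def r3_def r4_def by simp
qed

section \<open>Matroid intersection\<close>

text \<open>Integer-valued rank functions with these properties are exactly the rank functions of matroids
  on \<open>E\<close>; independent sets are the \<open>I\<close> with \<open>r I = card I\<close>.\<close>

definition matroid_rank :: "'e set \<Rightarrow> ('e set \<Rightarrow> nat) \<Rightarrow> bool" where
  "matroid_rank E r \<longleftrightarrow> r {} = 0 \<and> (\<forall>X. X \<subseteq> E \<longrightarrow> r X \<le> card X) \<and>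
     (\<forall>X Y. X \<subseteq> Y \<longrightarrow> Y \<subseteq> E \<longrightarrow> r X \<le> r Y) \<and>
     (\<forall>X Y. X \<subseteq> E \<longrightarrow> Y \<subseteq> E \<longrightarrow> r (X \<union> Y) + r (X \<inter> Y) \<le> r X + r Y)"

lemma matroid_rank_empty: "matroid_rank E r \<Longrightarrow> r {} = 0"
  unfolding matroid_rank_def by blast

lemma matroid_rank_le_card: "matroid_rank E r \<Longrightarrow> X \<subseteq> E \<Longrightarrow> r X \<le> card X"
  unfolding matroid_rank_def by blast

lemma matroid_rank_mono: "matroid_rank E r \<Longrightarrow> X \<subseteq> Y \<Longrightarrow> Y \<subseteq> E \<Longrightarrow> r X \<le> r Y"
  unfolding matroid_rank_def by blast

lemma matroid_rank_submodular:
  "matroid_rank E r \<Longrightarrow> X \<subseteq> E \<Longrightarrow> Y \<subseteq> E \<Longrightarrow> r (X \<union> Y) + r (X \<inter> Y) \<le> r X + r Y"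
  unfolding matroid_rank_def by blast

lemma matroid_rank_subset: "matroid_rank E r \<Longrightarrow> E' \<subseteq> E \<Longrightarrow> matroid_rank E' r"
  unfolding matroid_rank_def by (meson subset_trans)

lemma matroid_rank_insert_le:
  assumes "matroid_rank E r" "X \<subseteq> E" "e \<in> E" "e \<notin> X"
  shows "r (insert e X) \<le> r X + r {e}"
proof -
  have "X \<inter> {e} = {}"
    using assms(4) by blast
  then show ?thesis
    using matroid_rank_submodular[OF assms(1,2), of "{e}"] matroid_rank_empty[OF assms(1)] assms(3)
    by simp
qed

lemma matroid_rank_singleton_eq_1:
  assumes "matroid_rank E r" "X \<subseteq> E" "e \<in> E" "r X < r (insert e X)"
  shows "r {e} = 1"
proof -
  have "e \<notin> X"
    using assms(4) insert_absorb by fastforce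
  then have "r (insert e X) \<le> r X + r {e}"
    by (rule matroid_rank_insert_le[OF assms(1-3)])
  then have "r {e} \<noteq> 0"
    using assms(4) by simp
  moreover have "r {e} \<le> 1"
    using matroid_rank_le_card[OF assms(1), of "{e}"] assms(3) by simp
  ultimately show ?thesis
    by simp
qed

lemma matroid_rank_contract:
  assumes m: "matroid_rank E r" and e: "e \<in> E" and re: "r {e} = 1"
  shows "matroid_rank (E - {e}) (\<lambda>X. r (insert e X) - 1)"
proof -
  have ge1: "1 \<le> r (insert e X)" if "X \<subseteq> E" for X
    using matroid_rank_mono[OF m, of "{e}" "insert e X"] that e re by simp
  show ?thesis
    unfolding matroid_rank_def
  proof (intro conjI allI impI)
    show "r (insert e {}) - 1 = 0"
      using re by simp
  next
    fix X assume X: "X \<subseteq> E - {e}"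
    then have "r (insert e X) \<le> r X + 1" and "r X \<le> card X"
      using matroid_rank_insert_le[OF m, of X e] matroid_rank_le_card[OF m, of X] e re by auto
    then show "r (insert e X) - 1 \<le> card X"
      by simp
  next
    fix X Y assume "X \<subseteq> Y" "Y \<subseteq> E - {e}"
    then have "r (insert e X) \<le> r (insert e Y)"
      using e by (intro matroid_rank_mono[OF m]) auto
    then show "r (insert e X) - 1 \<le> r (insert e Y) - 1"
      by (rule diff_le_mono)
  next
    fix X Y assume X: "X \<subseteq> E - {e}" and Y: "Y \<subseteq> E - {e}"
    have "insert e X \<subseteq> E" "insert e Y \<subseteq> E"
      using X Y e by auto
    moreover have "insert e X \<union> insert e Y = insert e (X \<union> Y)" "insert e X \<inter> insert e Y = insert e (X \<inter> Y)"
      by auto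
    ultimately have "r (insert e (X \<union> Y)) + r (insert e (X \<inter> Y)) \<le> r (insert e X) + r (insert e Y)"
      using matroid_rank_submodular[OF m] by metis
    moreover have "X \<union> Y \<subseteq> E" "X \<inter> Y \<subseteq> E"
      using X Y by auto
    then have "1 \<le> r (insert e (X \<union> Y))" "1 \<le> r (insert e (X \<inter> Y))"
      using ge1 by blast+
    ultimately show "r (insert e (X \<union> Y)) - 1 + (r (insert e (X \<inter> Y)) - 1)
        \<le> r (insert e X) - 1 + (r (insert e Y) - 1)"
      by simp
  qed
qed

lemma matroid_rank_insert_eq_card_of_contract:
  assumes m: "matroid_rank E r" and e: "e \<in> E" and re: "r {e} = 1"
    and I: "I \<subseteq> E - {e}" "finite I" "r (insert e I) - 1 = card I"
  shows "r (insert e I) = card (insert e I)"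
proof -
  have "1 \<le> r (insert e I)"
    using matroid_rank_mono[OF m, of "{e}" "insert e I"] I(1) e re by auto
  moreover have "e \<notin> I"
    using I(1) by blast
  then have "card (insert e I) = Suc (card I)"
    using I(2) by simp
  ultimately show ?thesis
    using I(3) by simp
qed

lemma matroid_rank_rank_mat:
  fixes M :: "'r \<Rightarrow> 'c \<Rightarrow> 'a::{field,finite}"
  assumes "finite B"
  shows "matroid_rank B (\<lambda>X. rank_mat A X M)"
  unfolding matroid_rank_def
proof (intro conjI allI impI)
  fix X assume "X \<subseteq> B"
  then show "rank_mat A X M \<le> card X"
    using assms by (intro rank_mat_le_card) (rule finite_subset)
next
  fix X Y assume "X \<subseteq> Y" "Y \<subseteq> B"
  then show "rank_mat A X M \<le> rank_mat A Y M"
    using assms by (intro rank_mat_mono) (auto intro: finite_subset)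
next
  fix X Y assume "X \<subseteq> B" "Y \<subseteq> B"
  then have "finite X" "finite Y"
    using assms finite_subset by blast+
  then show "rank_mat A (X \<union> Y) M + rank_mat A (X \<inter> Y) M \<le> rank_mat A X M + rank_mat A Y M"
    using rank_mat_submodular[of X Y A A M] by simp
qed simp

lemma matroid_rank_singletons_of_cover:
  assumes m1: "matroid_rank E r1" and m2: "matroid_rank E r2" and e: "e \<in> E"
    and cover: "\<forall>X. X \<subseteq> E \<longrightarrow> k \<le> r1 X + r2 (E - X)"
    and A: "A \<subseteq> E - {e}" "r1 A + r2 (E - {e} - A) < k"
  shows "r1 {e} = 1" "r2 {e} = 1"
proof -
  have AE: "A \<subseteq> E"
    using A(1) by blast
  have "E - insert e A = E - {e} - A"
    by auto
  then have "k \<le> r1 (insert e A) + r2 (E - {e} - A)"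
    using cover[rule_format, of "insert e A"] AE e by simp
  then have "r1 A < r1 (insert e A)"
    using A(2) by simp
  then show "r1 {e} = 1"
    using AE e by (intro matroid_rank_singleton_eq_1[OF m1]) auto
  have "E - A = insert e (E - {e} - A)"
    using A(1) e by auto
  then have "r2 (E - {e} - A) < r2 (insert e (E - {e} - A))"
    using A(2) cover[rule_format, OF AE] by simp
  then show "r2 {e} = 1"
    using e by (intro matroid_rank_singleton_eq_1[OF m2]) auto
qed

text \<open>If deleting \<open>e\<close> breaks the bound, as witnessed by \<open>A\<close>, then contracting \<open>e\<close> in both matroids
  keeps it for \<open>k - 1\<close>: otherwise submodularity at \<open>A\<close> and \<open>insert e B\<close> produces two splits of \<open>E\<close>
  whose bounds add up to less than \<open>2 * k\<close>.\<close>

lemma contracted_cover_bound: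
  assumes m1: "matroid_rank E r1" and m2: "matroid_rank E r2" and e: "e \<in> E"
    and r1e: "r1 {e} = 1" and r2e: "r2 {e} = 1"
    and cover: "\<forall>X. X \<subseteq> E \<longrightarrow> k \<le> r1 X + r2 (E - X)"
    and A: "A \<subseteq> E - {e}" "r1 A + r2 (E - {e} - A) < k"
    and B: "B \<subseteq> E - {e}"
  shows "k - 1 \<le> (r1 (insert e B) - 1) + (r2 (insert e (E - {e} - B)) - 1)"
proof -
  have "1 \<le> r1 (insert e B)"
    using matroid_rank_mono[OF m1, of "{e}" "insert e B"] B e r1e by auto
  moreover have "1 \<le> r2 (E - B)"
    using matroid_rank_mono[OF m2, of "{e}" "E - B"] B e r2e by auto
  moreover have "insert e (E - {e} - B) = E - B"
    using e B by auto
  moreover have "k < r1 (insert e B) + r2 (E - B)"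
  proof (rule ccontr)
    assume hB: "\<not> ?thesis"
    have AE: "A \<subseteq> E" and BE: "insert e B \<subseteq> E" and EA: "E - {e} - A \<subseteq> E"
      using A(1) B e by auto
    have "r1 (insert e (A \<union> B)) + r1 (A \<inter> B) \<le> r1 A + r1 (insert e B)"
    proof -
      have "e \<notin> A"
        using A(1) by blast
      then show ?thesis
        using matroid_rank_submodular[OF m1 AE BE] by simp
    qed
    moreover have "r2 (E - (A \<inter> B)) + r2 (E - insert e (A \<union> B)) \<le> r2 (E - {e} - A) + r2 (E - B)"
    proof -
      have "(E - {e} - A) \<union> (E - B) = E - (A \<inter> B)" "(E - {e} - A) \<inter> (E - B) = E - insert e (A \<union> B)"
        using e B by auto
      then show ?thesis
        using matroid_rank_submodular[OF m2 EA, of "E - B"] by simp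
    qed
    moreover have "k \<le> r1 (insert e (A \<union> B)) + r2 (E - insert e (A \<union> B))"
      using cover AE BE by simp
    moreover have "k \<le> r1 (A \<inter> B) + r2 (E - (A \<inter> B))"
      using cover AE by blast
    ultimately show False
      using A(2) hB by linarith
  qed
  ultimately show ?thesis
    by simp
qed

text \<open>Edmonds' matroid intersection theorem. The induction deletes an element if the bound survives
  the deletion and contracts it otherwise.\<close>

theorem matroid_intersection:
  assumes "finite E" "matroid_rank E r1" "matroid_rank E r2" "\<forall>X. X \<subseteq> E \<longrightarrow> k \<le> r1 X + r2 (E - X)"
  shows "\<exists>I. I \<subseteq> E \<and> card I = k \<and> r1 I = card I \<and> r2 I = card I"
  using assms
proof (induction "card E" arbitrary: E r1 r2 k rule: less_induct)
  case less
  note fE = less.prems(1) and m1 = less.prems(2) and m2 = less.prems(3) and cover = less.prems(4)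
  show ?case
  proof (cases "E = {}")
    case True
    then have "k = 0"
      using cover matroid_rank_empty[OF m1] matroid_rank_empty[OF m2] by auto
    then show ?thesis
      using True matroid_rank_empty[OF m1] matroid_rank_empty[OF m2] by auto
  next
    case False
    then obtain e where e: "e \<in> E"
      by blast
    define E' where "E' = E - {e}"
    have E'E: "E' \<subseteq> E" and fE': "finite E'"
      using fE by (auto simp: E'_def)
    have cE': "card E' < card E"
      unfolding E'_def using card_Diff1_less[OF fE e] .
    show ?thesis
    proof (cases "\<forall>X. X \<subseteq> E' \<longrightarrow> k \<le> r1 X + r2 (E' - X)")
      case True
      obtain I where "I \<subseteq> E'" "card I = k" "r1 I = card I" "r2 I = card I"
        using less.hyps[OF cE' fE' matroid_rank_subset[OF m1 E'E] matroid_rank_subset[OF m2 E'E] True]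
        by blast
      then show ?thesis
        using E'E by blast
    next
      case False
      then obtain A where A: "A \<subseteq> E'" "r1 A + r2 (E' - A) < k"
        by (auto simp: not_le)
      have r1e: "r1 {e} = 1" and r2e: "r2 {e} = 1"
        using matroid_rank_singletons_of_cover[OF m1 m2 e cover] A unfolding E'_def by blast+
      have "\<forall>B. B \<subseteq> E' \<longrightarrow> k - 1 \<le> (r1 (insert e B) - 1) + (r2 (insert e (E' - B)) - 1)"
        using contracted_cover_bound[OF m1 m2 e r1e r2e cover] A unfolding E'_def by blast
      then obtain I where I: "I \<subseteq> E'" "card I = k - 1"
          "r1 (insert e I) - 1 = card I" "r2 (insert e I) - 1 = card I"
        using less.hyps[OF cE' fE' matroid_rank_contract[OF m1 e r1e, folded E'_def]
            matroid_rank_contract[OF m2 e r2e, folded E'_def]]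
        by blast
      have fI: "finite I"
        using I(1) fE' finite_subset by blast
      then have "r1 (insert e I) = card (insert e I)" "r2 (insert e I) = card (insert e I)"
        using matroid_rank_insert_eq_card_of_contract[OF m1 e r1e] matroid_rank_insert_eq_card_of_contract[OF m2 e r2e]
          I(1,3,4) unfolding E'_def by blast+
      moreover have "e \<notin> I"
        using I(1) unfolding E'_def by blast
      then have "card (insert e I) = k"
        using I(2) fI A(2) by simp
      moreover have "insert e I \<subseteq> E"
        using I(1) E'E e by blast
      ultimately show ?thesis
        by blast
    qed
  qed
qed

section \<open>Cuts of layered networks\<close>

definition edge_mat :: "'a::field itself \<Rightarrow> (('n \<times> 'q) \<times> ('n \<times> 'q)) set \<Rightarrow> 'n \<times> 'q \<Rightarrow> 'n \<times> 'q \<Rightarrow> 'a" where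
  "edge_mat F E q p = (if (p, q) \<in> E then 1 else 0)"

definition cut_in_ports :: "(('n \<times> 'q) \<times> ('n \<times> 'q)) set \<Rightarrow> 'n set \<Rightarrow> 'n set \<Rightarrow> ('n \<times> 'q) set" where
  "cut_in_ports E N \<Omega> = {q. \<exists>p. (p, q) \<in> E \<and> fst p \<in> \<Omega> \<and> fst q \<in> N - \<Omega>}"

definition cut_out_ports :: "(('n \<times> 'q) \<times> ('n \<times> 'q)) set \<Rightarrow> 'n set \<Rightarrow> 'n set \<Rightarrow> ('n \<times> 'q) set" where
  "cut_out_ports E N \<Omega> = {p. \<exists>q. (p, q) \<in> E \<and> fst p \<in> \<Omega> \<and> fst q \<in> N - \<Omega>}"

lemma cut_rank_eq_rank_mat:
  "cut_rank F E N \<Omega> = rank_mat (cut_in_ports E N \<Omega>) (cut_out_ports E N \<Omega>) (edge_mat F E)"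
  unfolding cut_rank_def cut_in_ports_def cut_out_ports_def edge_mat_def ..

lemma layered_adt_network_edge:
  assumes "layered_adt_network V E n layer lam S" "((a, i), (b, j)) \<in> E"
  shows "a \<in> V \<and> b \<in> V \<and> i < n \<and> j < n \<and> layer b = Suc (layer a)"
  using assms unfolding layered_adt_network_def by blast

lemma layered_adt_network_out_ports:
  assumes "layered_adt_network V E n layer lam S" "(p, q) \<in> E"
  shows "p \<in> V \<times> {..<n}"
  using layered_adt_network_edge[OF assms(1)] assms(2) by (cases p; cases q) auto

lemma finite_cut_out_ports:
  assumes "layered_adt_network V E n layer lam S"
  shows "finite (cut_out_ports E N \<Omega>)"
proof -
  have "cut_out_ports E N \<Omega> \<subseteq> V \<times> {..<n}"
    using layered_adt_network_out_ports[OF assms] by (auto simp: cut_out_ports_def)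
  moreover have "finite V"
    using assms unfolding layered_adt_network_def by blast
  ultimately show ?thesis
    using finite_subset by blast
qed

lemma cut_in_ports_layer_le:
  fixes layer :: "'v \<Rightarrow> nat"
  assumes "\<forall>v\<in>V. l + 1 \<le> layer v \<longrightarrow> v \<in> \<Omega>" "(b, j) \<in> cut_in_ports E V \<Omega>"
  shows "layer b \<le> l"
proof -
  have "b \<in> V - \<Omega>"
    using assms(2) unfolding cut_in_ports_def by auto
  then show ?thesis
    using assms(1) by auto
qed

lemma cut_out_ports_layer_less:
  assumes net: "layered_adt_network V E n layer lam S"
    and "\<forall>v\<in>V. l + 1 \<le> layer v \<longrightarrow> v \<in> \<Omega>" "(a, i) \<in> cut_out_ports E V \<Omega>"
  shows "layer a < l"
proof -
  obtain b j where "((a, i), (b, j)) \<in> E" "b \<in> V - \<Omega>"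
    using assms(3) by (force simp: cut_out_ports_def)
  then show ?thesis
    using layered_adt_network_edge[OF net] assms(2) by fastforce
qed

text \<open>Padding the cut matrix with all ports of both sides only adds zero rows and columns; the
  padded form makes the rows and columns of two cuts combine under union and intersection.\<close>

lemma cut_rank_eq_rank_mat_all_ports:
  assumes net: "layered_adt_network V E n layer lam S" and \<Omega>: "\<Omega> \<subseteq> V"
  shows "cut_rank F E V \<Omega> = rank_mat ((V - \<Omega>) \<times> {..<n}) (\<Omega> \<times> {..<n}) (edge_mat F E)"
proof -
  have "finite V"
    using net unfolding layered_adt_network_def by blast
  then have fin: "finite (\<Omega> \<times> {..<n})"
    using \<Omega> finite_subset by blast
  have edge: "(p, q) \<in> E \<Longrightarrow> p \<in> V \<times> {..<n} \<and> q \<in> V \<times> {..<n}" for p q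
    using layered_adt_network_edge[OF net] by (cases p; cases q) auto
  have rows: "cut_in_ports E V \<Omega> \<subseteq> (V - \<Omega>) \<times> {..<n}" and cols: "cut_out_ports E V \<Omega> \<subseteq> \<Omega> \<times> {..<n}"
    using edge by (fastforce simp: cut_in_ports_def cut_out_ports_def)+
  have "rank_mat ((V - \<Omega>) \<times> {..<n}) (\<Omega> \<times> {..<n}) (edge_mat F E)
      = rank_mat ((V - \<Omega>) \<times> {..<n}) (cut_out_ports E V \<Omega>) (edge_mat F E)"
    using fin by (intro rank_mat_zero_cols[OF cols]) (auto simp: edge_mat_def cut_out_ports_def)
  also have "\<dots> = cut_rank F E V \<Omega>"
    unfolding cut_rank_eq_rank_mat
    by (intro rank_mat_zero_rows[OF rows]) (auto simp: edge_mat_def cut_in_ports_def cut_out_ports_def)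
  finally show ?thesis ..
qed

lemma cut_rank_submodular:
  fixes F :: "'a::{field,finite} itself"
  assumes net: "layered_adt_network V E n layer lam S" and "\<Omega>1 \<subseteq> V" "\<Omega>2 \<subseteq> V"
  shows "cut_rank F E V (\<Omega>1 \<union> \<Omega>2) + cut_rank F E V (\<Omega>1 \<inter> \<Omega>2) \<le> cut_rank F E V \<Omega>1 + cut_rank F E V \<Omega>2"
proof -
  have "finite V"
    using net unfolding layered_adt_network_def by blast
  then have "finite (\<Omega>1 \<times> {..<n})" "finite (\<Omega>2 \<times> {..<n})"
    using assms(2,3) finite_subset by blast+
  from rank_mat_submodular[OF this, of "(V - \<Omega>1) \<times> {..<n}" "(V - \<Omega>2) \<times> {..<n}" "edge_mat F E"]
  have "rank_mat ((V - (\<Omega>1 \<inter> \<Omega>2)) \<times> {..<n}) ((\<Omega>1 \<inter> \<Omega>2) \<times> {..<n}) (edge_mat F E)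
      + rank_mat ((V - (\<Omega>1 \<union> \<Omega>2)) \<times> {..<n}) ((\<Omega>1 \<union> \<Omega>2) \<times> {..<n}) (edge_mat F E)
      \<le> rank_mat ((V - \<Omega>1) \<times> {..<n}) (\<Omega>1 \<times> {..<n}) (edge_mat F E)
        + rank_mat ((V - \<Omega>2) \<times> {..<n}) (\<Omega>2 \<times> {..<n}) (edge_mat F E)"
    by (simp add: Sigma_Un_distrib1 Sigma_Int_distrib1 Diff_Int Diff_Un)
  then show ?thesis
    using assms by (simp add: cut_rank_eq_rank_mat_all_ports[OF net] le_infI1)
qed

lemma mincut_le_cut_rank:
  assumes "finite N" "\<Omega> \<subseteq> N" "S \<in> \<Omega>" "T \<in> N - \<Omega>"
  shows "mincut F N E S T \<le> cut_rank F E N \<Omega>"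
proof -
  have "finite {cut_rank F E N \<Omega> | \<Omega>. \<Omega> \<subseteq> N \<and> S \<in> \<Omega> \<and> T \<in> N - \<Omega>}"
    using assms(1) by simp
  then show ?thesis
    unfolding mincut_def using assms by (intro Min_le) blast+
qed

lemma le_mincut:
  assumes "finite N" "S \<in> N" "T \<in> N" "S \<noteq> T"
    and "\<And>\<Omega>. \<Omega> \<subseteq> N \<Longrightarrow> S \<in> \<Omega> \<Longrightarrow> T \<notin> \<Omega> \<Longrightarrow> k \<le> cut_rank F E N \<Omega>"
  shows "k \<le> mincut F N E S T"
proof -
  have "finite {cut_rank F E N \<Omega> | \<Omega>. \<Omega> \<subseteq> N \<and> S \<in> \<Omega> \<and> T \<in> N - \<Omega>}"
    using assms(1) by simp
  moreover have "cut_rank F E N {S} \<in> {cut_rank F E N \<Omega> | \<Omega>. \<Omega> \<subseteq> N \<and> S \<in> \<Omega> \<and> T \<in> N - \<Omega>}"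
    using assms(2-4) by blast
  ultimately show ?thesis
    unfolding mincut_def using assms(5) by (subst Min_ge_iff) blast+
qed

section \<open>The matroid of output ports at one layer\<close>

definition upper_cuts :: "'v set \<Rightarrow> ('v \<Rightarrow> nat) \<Rightarrow> nat \<Rightarrow> 'v \<Rightarrow> 'v set set" where
  "upper_cuts V layer l S = {\<Omega>. \<Omega> \<subseteq> V \<and> S \<in> \<Omega> \<and> (\<forall>v\<in>V. l + 1 \<le> layer v \<longrightarrow> v \<in> \<Omega>)}"

definition layer_out_ports :: "('v \<Rightarrow> nat) \<Rightarrow> nat \<Rightarrow> nat \<Rightarrow> 'v set \<Rightarrow> 'v port set" where
  "layer_out_ports layer n l \<Omega> = {OutP v i | v i. v \<in> \<Omega> \<and> layer v = l \<and> i < n}"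

text \<open>For output ports \<open>X\<close> at layer \<open>l\<close>, \<open>port_cut_rank\<close> is the min-cut from \<open>S\<close> to the virtual
  sink \<open>T(X)\<close> over the cuts whose source side contains all layers beyond \<open>l\<close>: such a cut \<open>\<Omega>\<close>
  pays for its crossing edges and for the ports of \<open>X\<close> on its source side.\<close>

definition port_cut_rank ::
  "'a::field itself \<Rightarrow> (('v \<times> nat) \<times> ('v \<times> nat)) set \<Rightarrow> 'v set \<Rightarrow> nat \<Rightarrow> ('v \<Rightarrow> nat) \<Rightarrow> nat \<Rightarrow> 'v \<Rightarrow>
   'v port set \<Rightarrow> nat" where
  "port_cut_rank F E V n layer l S X =
     Min {cut_rank F E V \<Omega> + card (X \<inter> layer_out_ports layer n l \<Omega>) | \<Omega>. \<Omega> \<in> upper_cuts V layer l S}"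

lemma layer_out_ports_Un:
  "layer_out_ports layer n l (A \<union> B) = layer_out_ports layer n l A \<union> layer_out_ports layer n l B"
  unfolding layer_out_ports_def by blast

lemma layer_out_ports_Int:
  "layer_out_ports layer n l (A \<inter> B) = layer_out_ports layer n l A \<inter> layer_out_ports layer n l B"
  unfolding layer_out_ports_def by blast

lemma layer_out_ports_mono: "A \<subseteq> B \<Longrightarrow> layer_out_ports layer n l A \<subseteq> layer_out_ports layer n l B"
  unfolding layer_out_ports_def by blast

lemma finite_layer_out_ports:
  assumes "finite A"
  shows "finite (layer_out_ports layer n l A)"
proof -
  have "layer_out_ports layer n l A \<subseteq> (\<lambda>(v, i). OutP v i) ` (A \<times> {..<n})"
    unfolding layer_out_ports_def by auto
  then show ?thesis
    using assms finite_subset by blast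
qed

lemma upper_cuts_Un: "A \<in> upper_cuts V layer l S \<Longrightarrow> B \<in> upper_cuts V layer l S \<Longrightarrow> A \<union> B \<in> upper_cuts V layer l S"
  unfolding upper_cuts_def by blast

lemma upper_cuts_Int: "A \<in> upper_cuts V layer l S \<Longrightarrow> B \<in> upper_cuts V layer l S \<Longrightarrow> A \<inter> B \<in> upper_cuts V layer l S"
  unfolding upper_cuts_def by blast

lemma port_cut_rank_le:
  assumes "finite V" "\<Omega> \<in> upper_cuts V layer l S"
  shows "port_cut_rank F E V n layer l S X \<le> cut_rank F E V \<Omega> + card (X \<inter> layer_out_ports layer n l \<Omega>)"
proof -
  have "upper_cuts V layer l S \<subseteq> Pow V"
    unfolding upper_cuts_def by blast
  then have "finite {cut_rank F E V \<Omega> + card (X \<inter> layer_out_ports layer n l \<Omega>) | \<Omega>. \<Omega> \<in> upper_cuts V layer l S}"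
    using assms(1) by (simp add: finite_subset)
  then show ?thesis
    unfolding port_cut_rank_def using assms(2) by (intro Min_le) blast+
qed

lemma port_cut_rank_witness:
  assumes "finite V" "S \<in> V"
  obtains \<Omega> where "\<Omega> \<in> upper_cuts V layer l S"
    "port_cut_rank F E V n layer l S X = cut_rank F E V \<Omega> + card (X \<inter> layer_out_ports layer n l \<Omega>)"
proof -
  have "upper_cuts V layer l S \<subseteq> Pow V"
    unfolding upper_cuts_def by blast
  then have "finite {cut_rank F E V \<Omega> + card (X \<inter> layer_out_ports layer n l \<Omega>) | \<Omega>. \<Omega> \<in> upper_cuts V layer l S}"
    using assms(1) by (simp add: finite_subset)
  moreover have "V \<in> upper_cuts V layer l S"
    using assms(2) unfolding upper_cuts_def by blast
  ultimately have "port_cut_rank F E V n layer l S X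
      \<in> {cut_rank F E V \<Omega> + card (X \<inter> layer_out_ports layer n l \<Omega>) | \<Omega>. \<Omega> \<in> upper_cuts V layer l S}"
    unfolding port_cut_rank_def by (intro Min_in) blast+
  then show ?thesis
    using that by blast
qed

lemma card_Int_cross_le:
  assumes "finite X" "finite Y"
  shows "card ((X \<union> Y) \<inter> (P1 \<inter> P2)) + card ((X \<inter> Y) \<inter> (P1 \<union> P2)) \<le> card (X \<inter> P1) + card (Y \<inter> P2)"
proof -
  define L1 L2 R1 R2 where "L1 = (X \<union> Y) \<inter> (P1 \<inter> P2)" and "L2 = (X \<inter> Y) \<inter> (P1 \<union> P2)"
    and "R1 = X \<inter> P1" and "R2 = Y \<inter> P2"
  have fin: "finite L1" "finite L2" "finite R1" "finite R2"
    using assms by (auto simp: L1_def L2_def R1_def R2_def)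
  have "card L1 + card L2 = card (L1 \<union> L2) + card (L1 \<inter> L2)"
    using card_Un_Int[OF fin(1,2)] .
  also have "L1 \<inter> L2 = R1 \<inter> R2"
    by (auto simp: L1_def L2_def R1_def R2_def)
  also have "card (L1 \<union> L2) \<le> card (R1 \<union> R2)"
    using fin by (intro card_mono) (auto simp: L1_def L2_def R1_def R2_def)
  then have "card (L1 \<union> L2) + card (R1 \<inter> R2) \<le> card (R1 \<union> R2) + card (R1 \<inter> R2)"
    by simp
  also have "\<dots> = card R1 + card R2"
    using card_Un_Int[OF fin(3,4)] by simp
  finally show ?thesis
    unfolding L1_def L2_def R1_def R2_def .
qed

lemma port_cut_rank_submodular:
  fixes F :: "'a::{field,finite} itself"
  assumes net: "layered_adt_network V E n layer lam S" and fin: "finite X" "finite Y"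
  shows "port_cut_rank F E V n layer l S (X \<union> Y) + port_cut_rank F E V n layer l S (X \<inter> Y)
    \<le> port_cut_rank F E V n layer l S X + port_cut_rank F E V n layer l S Y"
proof -
  have fV: "finite V" and SV: "S \<in> V"
    using net unfolding layered_adt_network_def by blast+
  obtain \<Omega>1 where \<Omega>1: "\<Omega>1 \<in> upper_cuts V layer l S"
      "port_cut_rank F E V n layer l S X = cut_rank F E V \<Omega>1 + card (X \<inter> layer_out_ports layer n l \<Omega>1)"
    using port_cut_rank_witness[OF fV SV] .
  obtain \<Omega>2 where \<Omega>2: "\<Omega>2 \<in> upper_cuts V layer l S"
      "port_cut_rank F E V n layer l S Y = cut_rank F E V \<Omega>2 + card (Y \<inter> layer_out_ports layer n l \<Omega>2)"
    using port_cut_rank_witness[OF fV SV] .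
  have "port_cut_rank F E V n layer l S (X \<union> Y)
      \<le> cut_rank F E V (\<Omega>1 \<inter> \<Omega>2) + card ((X \<union> Y) \<inter> layer_out_ports layer n l (\<Omega>1 \<inter> \<Omega>2))"
    by (rule port_cut_rank_le[OF fV upper_cuts_Int[OF \<Omega>1(1) \<Omega>2(1)]])
  moreover have "port_cut_rank F E V n layer l S (X \<inter> Y)
      \<le> cut_rank F E V (\<Omega>1 \<union> \<Omega>2) + card ((X \<inter> Y) \<inter> layer_out_ports layer n l (\<Omega>1 \<union> \<Omega>2))"
    by (rule port_cut_rank_le[OF fV upper_cuts_Un[OF \<Omega>1(1) \<Omega>2(1)]])
  moreover have "cut_rank F E V (\<Omega>1 \<union> \<Omega>2) + cut_rank F E V (\<Omega>1 \<inter> \<Omega>2) \<le> cut_rank F E V \<Omega>1 + cut_rank F E V \<Omega>2"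
    using \<Omega>1(1) \<Omega>2(1) unfolding upper_cuts_def by (intro cut_rank_submodular[OF net]) auto
  moreover have "card ((X \<union> Y) \<inter> layer_out_ports layer n l (\<Omega>1 \<inter> \<Omega>2))
      + card ((X \<inter> Y) \<inter> layer_out_ports layer n l (\<Omega>1 \<union> \<Omega>2))
      \<le> card (X \<inter> layer_out_ports layer n l \<Omega>1) + card (Y \<inter> layer_out_ports layer n l \<Omega>2)"
    unfolding layer_out_ports_Un layer_out_ports_Int by (rule card_Int_cross_le[OF fin])
  ultimately show ?thesis
    using \<Omega>1(2) \<Omega>2(2) by linarith
qed

theorem matroid_rank_port_cut_rank:
  fixes F :: "'a::{field,finite} itself"
  assumes net: "layered_adt_network V E n layer lam S"
  shows "matroid_rank (layer_out_ports layer n l V) (port_cut_rank F E V n layer l S)"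
proof -
  have fV: "finite V" and SV: "S \<in> V"
    using net unfolding layered_adt_network_def by blast+
  have top: "V \<in> upper_cuts V layer l S"
    using SV unfolding upper_cuts_def by blast
  have cut_top: "cut_rank F E V V = 0"
    unfolding cut_rank_def by simp
  have fin: "X \<subseteq> layer_out_ports layer n l V \<Longrightarrow> finite X" for X
    using finite_layer_out_ports[OF fV] finite_subset by blast
  show ?thesis
    unfolding matroid_rank_def
  proof (intro conjI allI impI)
    show "port_cut_rank F E V n layer l S {} = 0"
      using port_cut_rank_le[OF fV top, of F E n "{}"] cut_top by simp
  next
    fix X assume X: "X \<subseteq> layer_out_ports layer n l V"
    have "port_cut_rank F E V n layer l S X \<le> card (X \<inter> layer_out_ports layer n l V)"
      using port_cut_rank_le[OF fV top, of F E n X] cut_top by simp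
    also have "\<dots> \<le> card X"
      using fin[OF X] by (simp add: card_mono)
    finally show "port_cut_rank F E V n layer l S X \<le> card X" .
  next
    fix X Y assume XY: "X \<subseteq> Y" and Y: "Y \<subseteq> layer_out_ports layer n l V"
    obtain \<Omega> where \<Omega>: "\<Omega> \<in> upper_cuts V layer l S"
        "port_cut_rank F E V n layer l S Y = cut_rank F E V \<Omega> + card (Y \<inter> layer_out_ports layer n l \<Omega>)"
      using port_cut_rank_witness[OF fV SV] .
    have "port_cut_rank F E V n layer l S X \<le> cut_rank F E V \<Omega> + card (X \<inter> layer_out_ports layer n l \<Omega>)"
      by (rule port_cut_rank_le[OF fV \<Omega>(1)])
    also have "\<dots> \<le> cut_rank F E V \<Omega> + card (Y \<inter> layer_out_ports layer n l \<Omega>)"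
      using XY fin[OF Y] by (intro add_left_mono card_mono) auto
    finally show "port_cut_rank F E V n layer l S X \<le> port_cut_rank F E V n layer l S Y"
      using \<Omega>(2) by simp
  next
    fix X Y assume "X \<subseteq> layer_out_ports layer n l V" "Y \<subseteq> layer_out_ports layer n l V"
    then show "port_cut_rank F E V n layer l S (X \<union> Y) + port_cut_rank F E V n layer l S (X \<inter> Y)
        \<le> port_cut_rank F E V n layer l S X + port_cut_rank F E V n layer l S Y"
      by (intro port_cut_rank_submodular[OF net] fin)
  qed
qed

lemma cover_bound_port_cut_rank:
  fixes F :: "'a::{field,finite} itself" and M :: "'r \<Rightarrow> 'v port \<Rightarrow> 'a"
  assumes net: "layered_adt_network V E n layer lam S"
    and bound: "\<forall>\<Omega>\<in>upper_cuts V layer l S. R \<le> cut_rank F E V \<Omega> + rank_mat A (layer_out_ports layer n l \<Omega>) M"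
    and X: "X \<subseteq> layer_out_ports layer n l V"
  shows "R \<le> port_cut_rank F E V n layer l S X + rank_mat A (layer_out_ports layer n l V - X) M"
proof -
  have fV: "finite V" and SV: "S \<in> V"
    using net unfolding layered_adt_network_def by blast+
  obtain \<Omega> where \<Omega>: "\<Omega> \<in> upper_cuts V layer l S"
      "port_cut_rank F E V n layer l S X = cut_rank F E V \<Omega> + card (X \<inter> layer_out_ports layer n l \<Omega>)"
    using port_cut_rank_witness[OF fV SV] .
  define P where "P = layer_out_ports layer n l \<Omega>"
  have "\<Omega> \<subseteq> V"
    using \<Omega>(1) unfolding upper_cuts_def by blast
  then have PV: "P \<subseteq> layer_out_ports layer n l V"
    unfolding P_def by (rule layer_out_ports_mono)
  have fP: "finite (P - X)" "finite (P \<inter> X)"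
    using finite_subset[OF PV finite_layer_out_ports[OF fV]] by auto
  have "rank_mat A P M \<le> rank_mat A (P - X) M + rank_mat A (P \<inter> X) M"
    using rank_mat_submodular[OF fP, of A A M] by (simp add: Un_Diff_Int)
  also have "rank_mat A (P \<inter> X) M \<le> card (X \<inter> P)"
    using rank_mat_le_card[OF fP(2)] by (simp add: Int_commute)
  also have "rank_mat A (P - X) M \<le> rank_mat A (layer_out_ports layer n l V - X) M"
    using PV finite_layer_out_ports[OF fV] by (intro rank_mat_mono) auto
  finally have "rank_mat A P M \<le> rank_mat A (layer_out_ports layer n l V - X) M + card (X \<inter> P)"
    by simp
  moreover have "R \<le> cut_rank F E V \<Omega> + rank_mat A P M"
    using bound \<Omega>(1) unfolding P_def by blast
  ultimately show ?thesis
    using \<Omega>(2) unfolding P_def by simp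
qed

section \<open>The network with a virtual sink\<close>

definition vport :: "'v \<times> nat \<Rightarrow> 'v option \<times> ('v port + nat)" where
  "vport p = (Some (fst p), Inr (snd p))"

definition sink_port :: "'v port \<Rightarrow> 'v option \<times> ('v port + nat)" where
  "sink_port w = (None, Inl w)"

fun port_pair :: "'v port \<Rightarrow> 'v \<times> nat" where
  "port_pair (OutP v i) = (v, i)"
| "port_pair (InP v j) = (v, j)"

lemma vport_eq_iff [simp]: "vport p = vport q \<longleftrightarrow> p = q"
  by (auto simp: vport_def prod_eq_iff)

lemma inj_vport: "inj vport"
  by (rule injI) simp

lemma inj_on_vport_port_pair_out:
  assumes "\<forall>w\<in>W. \<exists>v i. w = OutP v i"
  shows "inj_on (vport \<circ> port_pair) W"
proof (rule inj_onI)
  fix x y assume xy: "x \<in> W" "y \<in> W" "(vport \<circ> port_pair) x = (vport \<circ> port_pair) y"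
  obtain v i v' i' where "x = OutP v i" "y = OutP v' i'"
    using assms xy(1,2) by blast
  then show "x = y"
    using xy(3) by simp
qed

definition vport_layer :: "('v \<Rightarrow> nat) \<Rightarrow> nat \<Rightarrow> 'v option \<times> ('v port + nat) \<Rightarrow> nat" where
  "vport_layer layer l x = (case fst x of Some v \<Rightarrow> layer v | None \<Rightarrow> Suc l)"

lemma vport_layer_vport [simp]: "vport_layer layer l (vport p) = layer (fst p)"
  by (simp add: vport_layer_def vport_def)

lemma vport_layer_sink_port [simp]: "vport_layer layer l (sink_port w) = Suc l"
  by (simp add: vport_layer_def sink_port_def)

lemma vport_edge_in_vsink_edges_iff:
  "(vport (a, i), vport (b, j)) \<in> vsink_edges E W \<longleftrightarrow>
     ((a, i), (b, j)) \<in> E \<and> \<not> ((\<exists>j'. InP b j' \<in> W) \<and> InP b j \<notin> W)"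
  unfolding vsink_edges_def vport_def by auto

lemma sink_edge_in_vsink_edges_iff:
  assumes "\<forall>w\<in>W. \<exists>v i. w = OutP v i"
  shows "(p, sink_port w) \<in> vsink_edges E W \<longleftrightarrow> w \<in> W \<and> p = vport (port_pair w)"
proof (cases w)
  case (OutP v i)
  then show ?thesis
    unfolding vsink_edges_def vport_def sink_port_def by auto
next
  case (InP v j)
  then have "w \<notin> W"
    using assms by blast
  then show ?thesis
    using InP unfolding vsink_edges_def vport_def sink_port_def by auto
qed

lemma layer_vport_vsink_edge:
  assumes net: "layered_adt_network V E n layer lam S" and e: "(vport p, vport q) \<in> vsink_edges E W"
  shows "layer (fst q) = Suc (layer (fst p))"
  using e layered_adt_network_edge[OF net] by (cases p; cases q) (auto simp: vport_edge_in_vsink_edges_iff)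

lemma vport_layer_vsink_edge:
  assumes net: "layered_adt_network V E n layer lam S"
    and W: "\<forall>w\<in>W. \<exists>v i. w = OutP v i \<and> layer v = l" and e: "(p, q) \<in> vsink_edges E W"
  shows "vport_layer layer l q = Suc (vport_layer layer l p)"
  using e W layered_adt_network_edge[OF net] unfolding vsink_edges_def vport_def sink_port_def
  by (auto simp: vport_layer_def)

lemma rank_vsink_embedded_cut:
  assumes keep: "\<forall>(b, j)\<in>cut_in_ports E V \<Omega>. \<forall>j'. InP b j' \<notin> W"
  shows "rank_mat (vport ` cut_in_ports E V \<Omega>) (vport ` cut_out_ports E V \<Omega>) (edge_mat F (vsink_edges E W))
    = cut_rank F E V \<Omega>"
proof -
  have "rank_mat (vport ` cut_in_ports E V \<Omega>) (vport ` cut_out_ports E V \<Omega>) (edge_mat F (vsink_edges E W))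
      = rank_mat (cut_in_ports E V \<Omega>) (cut_out_ports E V \<Omega>)
          (\<lambda>q p. edge_mat F (vsink_edges E W) (vport q) (vport p))"
    by (rule rank_mat_reindex[OF inj_on_subset[OF inj_vport subset_UNIV]])
  also have "\<dots> = rank_mat (cut_in_ports E V \<Omega>) (cut_out_ports E V \<Omega>) (edge_mat F E)"
  proof (rule rank_mat_cong, intro ballI)
    fix q p assume "q \<in> cut_in_ports E V \<Omega>" "p \<in> cut_out_ports E V \<Omega>"
    then show "edge_mat F (vsink_edges E W) (vport q) (vport p) = edge_mat F E q p"
      using keep by (cases p; cases q) (auto simp: edge_mat_def vport_edge_in_vsink_edges_iff)
  qed
  finally show ?thesis
    by (simp add: cut_rank_eq_rank_mat)
qed

lemma rank_vsink_port_block: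
  assumes W: "\<forall>w\<in>W. \<exists>v j. w = InP v j" and P: "\<forall>w\<in>P. \<exists>v i. w = OutP v i"
  shows "rank_mat ((vport \<circ> port_pair) ` W) ((vport \<circ> port_pair) ` P) (edge_mat F (vsink_edges E W))
    = rank_mat W P (port_inc F E)"
proof -
  have "rank_mat ((vport \<circ> port_pair) ` W) ((vport \<circ> port_pair) ` P) (edge_mat F (vsink_edges E W))
      = rank_mat W P (\<lambda>w' w. edge_mat F (vsink_edges E W) (vport (port_pair w')) (vport (port_pair w)))"
    using rank_mat_reindex[OF inj_on_vport_port_pair_out[OF P]] by simp
  also have "\<dots> = rank_mat W P (port_inc F E)"
  proof (rule rank_mat_cong, intro ballI)
    fix w' w assume w': "w' \<in> W" and w: "w \<in> P"
    obtain a i b j where "w = OutP a i" "w' = InP b j"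
      using W P w' w by blast
    then show "edge_mat F (vsink_edges E W) (vport (port_pair w')) (vport (port_pair w)) = port_inc F E w' w"
      using w' by (auto simp: edge_mat_def vport_edge_in_vsink_edges_iff)
  qed
  finally show ?thesis .
qed

lemma vsink_cut_edge_cases:
  assumes net: "layered_adt_network V E n layer lam S"
    and W: "\<forall>w\<in>W. \<exists>v j. w = InP v j \<and> layer v = l + 1"
    and U: "U = {v. \<exists>j. InP v j \<in> W}"
    and e: "(p, q) \<in> vsink_edges E W" "fst p \<in> Some ` (\<Omega> - U)" "fst q \<notin> Some ` (\<Omega> - U)"
  shows "\<exists>a i b j. p = vport (a, i) \<and> q = vport (b, j) \<and>
    ((a, i) \<in> cut_out_ports E V \<Omega> \<and> (b, j) \<in> cut_in_ports E V \<Omega>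
      \<or> OutP a i \<in> layer_out_ports layer n l \<Omega> \<and> InP b j \<in> W)"
proof -
  have "(\<exists>a i b j. p = vport (a, i) \<and> q = vport (b, j) \<and> ((a, i), (b, j)) \<in> E \<and>
          \<not> ((\<exists>j'. InP b j' \<in> W) \<and> InP b j \<notin> W))
    \<or> (\<exists>v i. p = vport (v, i) \<and> OutP v i \<in> W)
    \<or> (\<exists>v j. fst p = Some v \<and> InP v j \<in> W)"
    using e(1) unfolding vsink_edges_def vport_def by auto
  moreover have "\<not> (\<exists>v i. p = vport (v, i) \<and> OutP v i \<in> W)"
    using W by blast
  moreover have "\<not> (\<exists>v j. fst p = Some v \<and> InP v j \<in> W)"
    using e(2) U by auto
  ultimately obtain a i b j where pq: "p = vport (a, i)" "q = vport (b, j)" "((a, i), (b, j)) \<in> E"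
    and keep: "\<not> ((\<exists>j'. InP b j' \<in> W) \<and> InP b j \<notin> W)"
    by blast
  have a: "a \<in> \<Omega> - U" and b: "b \<notin> \<Omega> - U"
    using e(2,3) pq(1,2) by (auto simp: vport_def)
  have edge: "a \<in> V \<and> b \<in> V \<and> i < n \<and> j < n \<and> layer b = Suc (layer a)"
    using layered_adt_network_edge[OF net pq(3)] .
  show ?thesis
  proof (cases "b \<in> U")
    case True
    then have "InP b j \<in> W" and "layer b = l + 1"
      using keep U W by auto
    then have "OutP a i \<in> layer_out_ports layer n l \<Omega>"
      using a edge by (auto simp: layer_out_ports_def)
    then show ?thesis
      using pq(1,2) \<open>InP b j \<in> W\<close> by blast
  next
    case False
    then have "(a, i) \<in> cut_out_ports E V \<Omega>" "(b, j) \<in> cut_in_ports E V \<Omega>"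
      using pq(3) a b edge by (force simp: cut_out_ports_def cut_in_ports_def)+
    then show ?thesis
      using pq(1,2) by blast
  qed
qed

lemma vsink_in_ports_cut_ports_subset:
  assumes net: "layered_adt_network V E n layer lam S"
    and W: "\<forall>w\<in>W. \<exists>v j. w = InP v j \<and> layer v = l + 1"
    and U: "U = {v. \<exists>j. InP v j \<in> W}"
  shows "cut_in_ports (vsink_edges E W) N (Some ` (\<Omega> - U))
      \<subseteq> vport ` cut_in_ports E V \<Omega> \<union> (vport \<circ> port_pair) ` W"
    and "cut_out_ports (vsink_edges E W) N (Some ` (\<Omega> - U))
      \<subseteq> vport ` cut_out_ports E V \<Omega> \<union> (vport \<circ> port_pair) ` layer_out_ports layer n l \<Omega>"
proof -
  have cross: "q \<in> vport ` cut_in_ports E V \<Omega> \<union> (vport \<circ> port_pair) ` W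
      \<and> p \<in> vport ` cut_out_ports E V \<Omega> \<union> (vport \<circ> port_pair) ` layer_out_ports layer n l \<Omega>"
    if pq: "(p, q) \<in> vsink_edges E W" "fst p \<in> Some ` (\<Omega> - U)" "fst q \<notin> Some ` (\<Omega> - U)" for p q
  proof -
    obtain a i b j where "p = vport (a, i)" "q = vport (b, j)"
        "(a, i) \<in> cut_out_ports E V \<Omega> \<and> (b, j) \<in> cut_in_ports E V \<Omega>
         \<or> OutP a i \<in> layer_out_ports layer n l \<Omega> \<and> InP b j \<in> W"
      using vsink_cut_edge_cases[OF net W U pq] by blast
    then show ?thesis
      by (auto intro: rev_image_eqI)
  qed
  show "cut_in_ports (vsink_edges E W) N (Some ` (\<Omega> - U))
      \<subseteq> vport ` cut_in_ports E V \<Omega> \<union> (vport \<circ> port_pair) ` W"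
    using cross unfolding cut_in_ports_def by blast
  show "cut_out_ports (vsink_edges E W) N (Some ` (\<Omega> - U))
      \<subseteq> vport ` cut_out_ports E V \<Omega> \<union> (vport \<circ> port_pair) ` layer_out_ports layer n l \<Omega>"
    using cross unfolding cut_out_ports_def by blast
qed

lemma vsink_in_ports_cut_rank_le:
  fixes F :: "'a::{field,finite} itself" and layer :: "'v \<Rightarrow> nat"
  assumes net: "layered_adt_network V E n layer lam S"
    and W: "\<forall>w\<in>W. \<exists>v j. w = InP v j \<and> layer v = l + 1"
    and U: "U = {v. \<exists>j. InP v j \<in> W}"
    and \<Omega>: "\<Omega> \<subseteq> V" "\<forall>v\<in>V. l + 1 \<le> layer v \<longrightarrow> v \<in> \<Omega>"
  shows "cut_rank F (vsink_edges E W) (insert None (Some ` V)) (Some ` (\<Omega> - U))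
    \<le> cut_rank F E V \<Omega> + rank_mat W (layer_out_ports layer n l \<Omega>) (port_inc F E)"
proof -
  define ED \<Omega>' N where "ED = vsink_edges E W" and "\<Omega>' = Some ` (\<Omega> - U)" and "N = insert None (Some ` V)"
  define P where "P = layer_out_ports layer n l \<Omega>"
  define A1 B1 A2 B2 where "A1 = vport ` cut_in_ports E V \<Omega>" and "B1 = vport ` cut_out_ports E V \<Omega>"
    and "A2 = (vport \<circ> port_pair) ` W" and "B2 = (vport \<circ> port_pair) ` P"
  have P: "\<forall>w\<in>P. \<exists>v i. w = OutP v i \<and> layer v = l"
    unfolding P_def layer_out_ports_def by blast
  have "finite V"
    using net unfolding layered_adt_network_def by blast
  then have fin: "finite B1" "finite B2"
    unfolding B1_def B2_def P_def
    using finite_cut_out_ports[OF net] finite_layer_out_ports[OF finite_subset[OF \<Omega>(1)]] by auto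
  note in_below = cut_in_ports_layer_le[OF \<Omega>(2)] and out_below = cut_out_ports_layer_less[OF net \<Omega>(2)]
  have rows: "cut_in_ports ED N \<Omega>' \<subseteq> A1 \<union> A2" and cols: "cut_out_ports ED N \<Omega>' \<subseteq> B1 \<union> B2"
    using vsink_in_ports_cut_ports_subset[OF net W U]
    unfolding ED_def N_def \<Omega>'_def A1_def A2_def B1_def B2_def P_def by blast+
  have "cut_rank F ED N \<Omega>' \<le> rank_mat (A1 \<union> A2) (B1 \<union> B2) (edge_mat F ED)"
    unfolding cut_rank_eq_rank_mat using rows cols fin by (intro rank_mat_mono) auto
  also have "\<dots> = rank_mat A1 B1 (edge_mat F ED) + rank_mat A2 B2 (edge_mat F ED)"
  proof (rule rank_mat_layered_block_eq[OF fin, where g = "vport_layer layer l" and h = "vport_layer layer l"])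
    show "\<forall>b\<in>B1. vport_layer layer l b < l" "\<forall>b\<in>B2. vport_layer layer l b = l"
      "\<forall>r\<in>A1. vport_layer layer l r \<le> l" "\<forall>r\<in>A2. vport_layer layer l r = Suc l"
      unfolding A1_def A2_def B1_def B2_def using W P in_below out_below by auto
    have ranges: "A1 \<union> A2 \<subseteq> range vport" "B1 \<union> B2 \<subseteq> range vport"
      unfolding A1_def A2_def B1_def B2_def by auto
    show "\<forall>r\<in>A1 \<union> A2. \<forall>b\<in>B1 \<union> B2.
        edge_mat F ED r b \<noteq> 0 \<longrightarrow> vport_layer layer l r = Suc (vport_layer layer l b)"
    proof (intro ballI impI)
      fix r b assume "r \<in> A1 \<union> A2" "b \<in> B1 \<union> B2" and nz: "edge_mat F ED r b \<noteq> 0"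
      then obtain q p where "r = vport q" "b = vport p"
        using ranges by blast
      moreover have "(b, r) \<in> ED"
        using nz by (simp add: edge_mat_def split: if_splits)
      ultimately show "vport_layer layer l r = Suc (vport_layer layer l b)"
        using layer_vport_vsink_edge[OF net] unfolding ED_def by simp
    qed
  qed
  also have "rank_mat A1 B1 (edge_mat F ED) = cut_rank F E V \<Omega>"
    unfolding A1_def B1_def ED_def
    using W U in_below by (intro rank_vsink_embedded_cut) fastforce
  also have "rank_mat A2 B2 (edge_mat F ED) = rank_mat W P (port_inc F E)"
    unfolding A2_def B2_def ED_def using W P by (intro rank_vsink_port_block) blast+
  finally show ?thesis
    unfolding ED_def N_def \<Omega>'_def P_def .
qed

lemma cut_bound_of_regular_in_ports:
  fixes F :: "'a::{field,finite} itself"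
  assumes net: "layered_adt_network V E n layer lam S" and l: "1 \<le> l"
    and reg: "regular F V E n layer S R W"
    and W: "\<forall>w\<in>W. \<exists>v j. w = InP v j \<and> layer v = l + 1"
    and \<Omega>: "\<Omega> \<in> upper_cuts V layer l S"
  shows "R \<le> cut_rank F E V \<Omega> + rank_mat W (layer_out_ports layer n l \<Omega>) (port_inc F E)"
proof -
  define U where "U = {v. \<exists>j. InP v j \<in> W}"
  have fV: "finite V" and "layer S = 1"
    using net unfolding layered_adt_network_def by blast+
  then have "S \<notin> U"
    using W l unfolding U_def by fastforce
  moreover have \<Omega>V: "\<Omega> \<subseteq> V" and "S \<in> \<Omega>" and up: "\<forall>v\<in>V. l + 1 \<le> layer v \<longrightarrow> v \<in> \<Omega>"
    using \<Omega> unfolding upper_cuts_def by blast+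
  ultimately have "mincut F (insert None (Some ` V)) (vsink_edges E W) (Some S) None
      \<le> cut_rank F (vsink_edges E W) (insert None (Some ` V)) (Some ` (\<Omega> - U))"
    using fV by (intro mincut_le_cut_rank) auto
  also have "\<dots> \<le> cut_rank F E V \<Omega> + rank_mat W (layer_out_ports layer n l \<Omega>) (port_inc F E)"
    by (rule vsink_in_ports_cut_rank_le[OF net W U_def \<Omega>V up])
  finally show ?thesis
    using reg unfolding regular_def by simp
qed

lemma vsink_edges_out_ports_cases:
  assumes "\<forall>w\<in>W. \<exists>v i. w = OutP v i" "(p, q) \<in> vsink_edges E W"
  shows "(\<exists>a i b j. p = vport (a, i) \<and> q = vport (b, j) \<and> ((a, i), (b, j)) \<in> E)
    \<or> (\<exists>w\<in>W. p = vport (port_pair w) \<and> q = sink_port w)"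
  using assms unfolding vsink_edges_def vport_def sink_port_def by fastforce

lemma vsink_mincut_le_card:
  assumes net: "layered_adt_network V E n layer lam S"
    and W: "\<forall>w\<in>W. \<exists>v i. w = OutP v i" "finite W"
  shows "mincut F (insert None (Some ` V)) (vsink_edges E W) (Some S) None \<le> card W"
proof -
  define N ED where "N = insert None (Some ` V)" and "ED = vsink_edges E W"
  have fV: "finite V" and "S \<in> V"
    using net unfolding layered_adt_network_def by blast+
  then have "mincut F N ED (Some S) None \<le> cut_rank F ED N (Some ` V)"
    unfolding N_def by (intro mincut_le_cut_rank) auto
  moreover have cols: "cut_out_ports ED N (Some ` V) \<subseteq> (vport \<circ> port_pair) ` W"
    using vsink_edges_out_ports_cases[OF W(1)]
    by (fastforce simp: cut_out_ports_def ED_def N_def vport_def)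
  then have "finite (cut_out_ports ED N (Some ` V))"
    using W(2) finite_subset by blast
  then have "cut_rank F ED N (Some ` V) \<le> card (cut_out_ports ED N (Some ` V))"
    unfolding cut_rank_eq_rank_mat by (rule rank_mat_le_card)
  moreover have "card (cut_out_ports ED N (Some ` V)) \<le> card W"
    using cols W(2) by (meson card_image_le card_mono finite_imageI order_trans)
  ultimately show ?thesis
    unfolding N_def ED_def by linarith
qed

lemma card_le_rank_vsink_sink_block:
  assumes W: "\<forall>w\<in>W. \<exists>v i. w = OutP v i" and X: "X \<subseteq> W" "finite X"
  shows "card X \<le> rank_mat (sink_port ` X) ((vport \<circ> port_pair) ` X) (edge_mat F (vsink_edges E W))"
proof -
  have inj: "inj_on (vport \<circ> port_pair) X"
    using W X(1) by (intro inj_on_vport_port_pair_out) blast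
  have "card ((vport \<circ> port_pair) ` X)
      \<le> rank_mat (sink_port ` X) ((vport \<circ> port_pair) ` X) (edge_mat F (vsink_edges E W))"
  proof (rule card_le_rank_mat_unit_rows[OF finite_imageI[OF X(2)]], intro ballI)
    fix b assume "b \<in> (vport \<circ> port_pair) ` X"
    then obtain w where w: "w \<in> X" "b = vport (port_pair w)"
      by auto
    have "edge_mat F (vsink_edges E W) (sink_port w) b' = (if b' = b then 1 else 0)"
      if "b' \<in> (vport \<circ> port_pair) ` X" for b'
      using w X(1) sink_edge_in_vsink_edges_iff[OF W] by (auto simp: edge_mat_def)
    then show "\<exists>r\<in>sink_port ` X. \<forall>b'\<in>(vport \<circ> port_pair) ` X.
        edge_mat F (vsink_edges E W) r b' = (if b' = b then 1 else 0)"
      using w(1) by blast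
  qed
  then show ?thesis
    using card_image[OF inj] by simp
qed

lemma finite_vsink_cut_out_ports:
  assumes net: "layered_adt_network V E n layer lam S" and W: "W \<subseteq> layer_out_ports layer n l V"
  shows "finite (cut_out_ports (vsink_edges E W) N \<Omega>)"
proof -
  have WO: "\<forall>w\<in>W. \<exists>v i. w = OutP v i"
    using W unfolding layer_out_ports_def by blast
  have "p \<in> vport ` (V \<times> {..<n})" if pq: "(p, q) \<in> vsink_edges E W" for p q
    using vsink_edges_out_ports_cases[OF WO pq]
  proof (elim disjE exE conjE bexE)
    fix a i b j assume "p = vport (a, i)" "((a, i), (b, j)) \<in> E"
    then show ?thesis
      using layered_adt_network_out_ports[OF net] by blast
  next
    fix w assume "w \<in> W" "p = vport (port_pair w)"
    then show ?thesis
      using W unfolding layer_out_ports_def by force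
  qed
  then have "cut_out_ports (vsink_edges E W) N \<Omega> \<subseteq> vport ` (V \<times> {..<n})"
    unfolding cut_out_ports_def by blast
  moreover have "finite V"
    using net unfolding layered_adt_network_def by blast
  ultimately show ?thesis
    using finite_subset by blast
qed

text \<open>Each cut \<open>\<Omega>''\<close> of the network extended by \<open>T(W)\<close> is compared with the cut \<open>\<Omega>\<close> of the
  original network that agrees with \<open>\<Omega>''\<close> up to layer \<open>l\<close> and contains all later layers.\<close>

lemma vsink_cut_ports_contain_cut_ports:
  assumes net: "layered_adt_network V E n layer lam S"
    and WO: "\<forall>w\<in>W. \<exists>v i. w = OutP v i"
    and \<Omega>: "\<Omega> = {v \<in> V. Some v \<in> \<Omega>'' \<or> l + 1 \<le> layer v}"
  shows "vport ` cut_in_ports E V \<Omega> \<subseteq> cut_in_ports (vsink_edges E W) (insert None (Some ` V)) \<Omega>''"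
    and "vport ` cut_out_ports E V \<Omega> \<subseteq> cut_out_ports (vsink_edges E W) (insert None (Some ` V)) \<Omega>''"
proof -
  define N ED where "N = insert None (Some ` V)" and "ED = vsink_edges E W"
  have cross: "vport (b, j) \<in> cut_in_ports ED N \<Omega>'' \<and> vport (a, i) \<in> cut_out_ports ED N \<Omega>''"
    if e: "((a, i), (b, j)) \<in> E" "a \<in> \<Omega>" "b \<in> V - \<Omega>" for a i b j
  proof -
    have "layer b = Suc (layer a)" "b \<in> V"
      using layered_adt_network_edge[OF net e(1)] by simp_all
    moreover have "Some b \<notin> \<Omega>''" "layer b < l + 1"
      using e(3) \<Omega> by auto
    ultimately have "Some a \<in> \<Omega>''" "Some b \<in> N - \<Omega>''"
      using e(2) \<Omega> unfolding N_def by auto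
    moreover have "(vport (a, i), vport (b, j)) \<in> ED"
      using e(1) WO unfolding ED_def by (auto simp: vport_edge_in_vsink_edges_iff)
    ultimately show ?thesis
      unfolding cut_in_ports_def cut_out_ports_def by (auto simp: vport_def)
  qed
  show "vport ` cut_in_ports E V \<Omega> \<subseteq> cut_in_ports (vsink_edges E W) (insert None (Some ` V)) \<Omega>''"
  proof
    fix x assume "x \<in> vport ` cut_in_ports E V \<Omega>"
    then obtain q where x: "x = vport q" and "q \<in> cut_in_ports E V \<Omega>"
      by blast
    then obtain p where "(p, q) \<in> E" "fst p \<in> \<Omega>" "fst q \<in> V - \<Omega>"
      unfolding cut_in_ports_def by blast
    moreover obtain a i b j where "p = (a, i)" "q = (b, j)"
      by fastforce
    ultimately show "x \<in> cut_in_ports (vsink_edges E W) (insert None (Some ` V)) \<Omega>''"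
      using cross x unfolding N_def ED_def by simp
  qed
  show "vport ` cut_out_ports E V \<Omega> \<subseteq> cut_out_ports (vsink_edges E W) (insert None (Some ` V)) \<Omega>''"
  proof
    fix x assume "x \<in> vport ` cut_out_ports E V \<Omega>"
    then obtain p where x: "x = vport p" and "p \<in> cut_out_ports E V \<Omega>"
      by blast
    then obtain q where "(p, q) \<in> E" "fst p \<in> \<Omega>" "fst q \<in> V - \<Omega>"
      unfolding cut_out_ports_def by blast
    moreover obtain a i b j where "p = (a, i)" "q = (b, j)"
      by fastforce
    ultimately show "x \<in> cut_out_ports (vsink_edges E W) (insert None (Some ` V)) \<Omega>''"
      using cross x unfolding N_def ED_def by simp
  qed
qed

lemma vsink_sink_ports_cross_cut:
  assumes WO: "\<forall>w\<in>W. \<exists>v i. w = OutP v i"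
    and w: "w \<in> W" "Some (fst (port_pair w)) \<in> \<Omega>''" and None: "None \<notin> \<Omega>''"
  shows "sink_port w \<in> cut_in_ports (vsink_edges E W) (insert None N) \<Omega>''"
    and "vport (port_pair w) \<in> cut_out_ports (vsink_edges E W) (insert None N) \<Omega>''"
proof -
  have "(vport (port_pair w), sink_port w) \<in> vsink_edges E W"
    using w(1) sink_edge_in_vsink_edges_iff[OF WO] by blast
  moreover have "fst (vport (port_pair w)) \<in> \<Omega>''" "fst (sink_port w) \<in> insert None N - \<Omega>''"
    using w(2) None by (auto simp: vport_def sink_port_def)
  ultimately show "sink_port w \<in> cut_in_ports (vsink_edges E W) (insert None N) \<Omega>''"
    and "vport (port_pair w) \<in> cut_out_ports (vsink_edges E W) (insert None N) \<Omega>''"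
    unfolding cut_in_ports_def cut_out_ports_def by blast+
qed

lemma vsink_cut_ports_superset:
  assumes net: "layered_adt_network V E n layer lam S"
    and W: "W \<subseteq> layer_out_ports layer n l V" and \<Omega>'': "None \<notin> \<Omega>''"
    and \<Omega>: "\<Omega> = {v \<in> V. Some v \<in> \<Omega>'' \<or> l + 1 \<le> layer v}"
  shows "vport ` cut_in_ports E V \<Omega> \<union> sink_port ` (W \<inter> layer_out_ports layer n l \<Omega>)
      \<subseteq> cut_in_ports (vsink_edges E W) (insert None (Some ` V)) \<Omega>''"
    and "vport ` cut_out_ports E V \<Omega> \<union> (vport \<circ> port_pair) ` (W \<inter> layer_out_ports layer n l \<Omega>)
      \<subseteq> cut_out_ports (vsink_edges E W) (insert None (Some ` V)) \<Omega>''"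
proof -
  have WO: "\<forall>w\<in>W. \<exists>v i. w = OutP v i"
    using W unfolding layer_out_ports_def by blast
  have "sink_port w \<in> cut_in_ports (vsink_edges E W) (insert None (Some ` V)) \<Omega>''
      \<and> vport (port_pair w) \<in> cut_out_ports (vsink_edges E W) (insert None (Some ` V)) \<Omega>''"
    if w: "w \<in> W \<inter> layer_out_ports layer n l \<Omega>" for w
  proof -
    have "Some (fst (port_pair w)) \<in> \<Omega>''"
      using w \<Omega> unfolding layer_out_ports_def by auto
    then show ?thesis
      using vsink_sink_ports_cross_cut[OF WO _ _ \<Omega>''] w by blast
  qed
  then show "vport ` cut_in_ports E V \<Omega> \<union> sink_port ` (W \<inter> layer_out_ports layer n l \<Omega>)
      \<subseteq> cut_in_ports (vsink_edges E W) (insert None (Some ` V)) \<Omega>''"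
    and "vport ` cut_out_ports E V \<Omega> \<union> (vport \<circ> port_pair) ` (W \<inter> layer_out_ports layer n l \<Omega>)
      \<subseteq> cut_out_ports (vsink_edges E W) (insert None (Some ` V)) \<Omega>''"
    using vsink_cut_ports_contain_cut_ports[OF net WO \<Omega>] by auto
qed

lemma vsink_out_ports_cut_rank_ge:
  fixes F :: "'a::field itself" and layer :: "'v \<Rightarrow> nat"
  assumes net: "layered_adt_network V E n layer lam S"
    and W: "W \<subseteq> layer_out_ports layer n l V"
    and \<Omega>'': "None \<notin> \<Omega>''"
    and \<Omega>: "\<Omega> = {v \<in> V. Some v \<in> \<Omega>'' \<or> l + 1 \<le> layer v}"
  shows "cut_rank F E V \<Omega> + card (W \<inter> layer_out_ports layer n l \<Omega>)
    \<le> cut_rank F (vsink_edges E W) (insert None (Some ` V)) \<Omega>''"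
proof -
  define N ED Wp where "N = insert None (Some ` V)" and "ED = vsink_edges E W"
    and "Wp = W \<inter> layer_out_ports layer n l \<Omega>"
  define A1 B1 A2 B2 where "A1 = vport ` cut_in_ports E V \<Omega>" and "B1 = vport ` cut_out_ports E V \<Omega>"
    and "A2 = sink_port ` Wp" and "B2 = (vport \<circ> port_pair) ` Wp"
  have fV: "finite V"
    using net unfolding layered_adt_network_def by blast
  have WL: "\<forall>w\<in>W. \<exists>v i. w = OutP v i \<and> layer v = l"
    using W unfolding layer_out_ports_def by blast
  then have WO: "\<forall>w\<in>W. \<exists>v i. w = OutP v i"
    by blast
  have Wp: "layer (fst (port_pair w)) = l" if "w \<in> Wp" for w
    using that unfolding Wp_def layer_out_ports_def by auto
  have fWp: "finite Wp"
    using finite_subset[OF W finite_layer_out_ports[OF fV]] unfolding Wp_def by blast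
  have up: "\<forall>v\<in>V. l + 1 \<le> layer v \<longrightarrow> v \<in> \<Omega>"
    using \<Omega> by blast
  note in_below = cut_in_ports_layer_le[OF up] and out_below = cut_out_ports_layer_less[OF net up]
  have "cut_rank F E V \<Omega> + card Wp \<le> rank_mat A1 B1 (edge_mat F ED) + rank_mat A2 B2 (edge_mat F ED)"
  proof -
    have "\<forall>(b, j)\<in>cut_in_ports E V \<Omega>. \<forall>j'. InP b j' \<notin> W"
      using WO by auto
    then have "rank_mat A1 B1 (edge_mat F ED) = cut_rank F E V \<Omega>"
      unfolding A1_def B1_def ED_def by (rule rank_vsink_embedded_cut)
    moreover have "card Wp \<le> rank_mat A2 B2 (edge_mat F ED)"
      unfolding A2_def B2_def ED_def using card_le_rank_vsink_sink_block[OF WO _ fWp] Wp_def by blast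
    ultimately show ?thesis
      by simp
  qed
  also have "\<dots> = rank_mat (A1 \<union> A2) (B1 \<union> B2) (edge_mat F ED)"
  proof (rule rank_mat_layered_block_eq[symmetric, where g = "vport_layer layer l" and h = "vport_layer layer l"])
    show "finite B1" "finite B2"
      unfolding B1_def B2_def using finite_cut_out_ports[OF net] fWp by simp_all
    show "\<forall>b\<in>B1. vport_layer layer l b < l" "\<forall>b\<in>B2. vport_layer layer l b = l"
      "\<forall>r\<in>A1. vport_layer layer l r \<le> l" "\<forall>r\<in>A2. vport_layer layer l r = Suc l"
      unfolding A1_def A2_def B1_def B2_def using Wp in_below out_below by auto
    show "\<forall>r\<in>A1 \<union> A2. \<forall>b\<in>B1 \<union> B2.
        edge_mat F ED r b \<noteq> 0 \<longrightarrow> vport_layer layer l r = Suc (vport_layer layer l b)"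
      using vport_layer_vsink_edge[OF net WL] unfolding ED_def by (simp add: edge_mat_def)
  qed
  also have "\<dots> \<le> cut_rank F ED N \<Omega>''"
    unfolding cut_rank_eq_rank_mat A1_def A2_def B1_def B2_def N_def ED_def Wp_def
    using vsink_cut_ports_superset[OF net W \<Omega>'' \<Omega>] finite_vsink_cut_out_ports[OF net W]
    by (rule rank_mat_mono)
  finally show ?thesis
    unfolding N_def ED_def Wp_def .
qed

lemma admissible_ports_layer_out_ports:
  assumes "finite V" "W \<subseteq> layer_out_ports layer n l V"
  shows "admissible_ports V n layer W"
proof -
  have W: "\<forall>w\<in>W. \<exists>v i. w = OutP v i \<and> v \<in> V \<and> i < n \<and> layer v = l"
    using assms(2) unfolding layer_out_ports_def by blast
  show ?thesis
    unfolding admissible_ports_def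
  proof (intro conjI allI impI)
    show "finite W"
      using assms finite_layer_out_ports finite_subset by blast
    show "\<exists>l. \<forall>w\<in>W. layer (port_node w) = l"
      using W by (intro exI[of _ l]) fastforce
    show "\<not> (\<exists>v i j. OutP v i \<in> W \<and> InP v j \<in> W)"
      using W by blast
  next
    fix v i assume "OutP v i \<in> W"
    then show "v \<in> V" "i < n"
      using W by blast+
  next
    fix v j assume "InP v j \<in> W"
    then show "v \<in> V" "j < n"
      using W by blast+
  qed
qed

lemma regular_of_cut_bound:
  fixes F :: "'a::{field,finite} itself"
  assumes net: "layered_adt_network V E n layer lam S"
    and W: "W \<subseteq> layer_out_ports layer n l V" "card W = R"
    and bound: "\<forall>\<Omega>\<in>upper_cuts V layer l S. R \<le> cut_rank F E V \<Omega> + card (W \<inter> layer_out_ports layer n l \<Omega>)"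
  shows "regular F V E n layer S R W"
proof -
  define N where "N = insert None (Some ` V)"
  have fV: "finite V" and SV: "S \<in> V"
    using net unfolding layered_adt_network_def by blast+
  have WO: "\<forall>w\<in>W. \<exists>v i. w = OutP v i"
    using W(1) unfolding layer_out_ports_def by blast
  have "finite W"
    using W(1) finite_layer_out_ports[OF fV] finite_subset by blast
  then have "mincut F N (vsink_edges E W) (Some S) None \<le> R"
    using vsink_mincut_le_card[OF net WO] W(2) unfolding N_def by simp
  moreover have "R \<le> mincut F N (vsink_edges E W) (Some S) None"
  proof (rule le_mincut)
    fix \<Omega>'' assume \<Omega>'': "\<Omega>'' \<subseteq> N" "Some S \<in> \<Omega>''" "None \<notin> \<Omega>''"
    define \<Omega> where "\<Omega> = {v \<in> V. Some v \<in> \<Omega>'' \<or> l + 1 \<le> layer v}"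
    have "\<Omega> \<in> upper_cuts V layer l S"
      using \<Omega>''(2) SV unfolding \<Omega>_def upper_cuts_def by auto
    then have "R \<le> cut_rank F E V \<Omega> + card (W \<inter> layer_out_ports layer n l \<Omega>)"
      using bound by blast
    also have "\<dots> \<le> cut_rank F (vsink_edges E W) N \<Omega>''"
      using vsink_out_ports_cut_rank_ge[OF net W(1) \<Omega>''(3) \<Omega>_def]
      unfolding N_def .
    finally show "R \<le> cut_rank F (vsink_edges E W) N \<Omega>''" .
  qed (use fV SV in \<open>auto simp: N_def\<close>)
  ultimately show ?thesis
    unfolding regular_def N_def using admissible_ports_layer_out_ports[OF fV W(1)] W(2) by simp
qed

theorem lemma5:
  fixes F :: "'a::{field, finite} itself"
    and V :: "'v set" and E :: "(('v \<times> nat) \<times> ('v \<times> nat)) set"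
    and n :: nat and layer :: "'v \<Rightarrow> nat" and lam :: nat and S :: 'v
    and \<T> :: "'v set" and l :: nat and W' :: "'v port set"
  assumes net: "layered_adt_network V E n layer lam S"
    and dests: "\<T> \<subseteq> V" "\<T> \<noteq> {}" "S \<notin> \<T>"
    and l: "1 \<le> l" "l \<le> lam - 1"
    and reg: "regular F V E n layer S (min_rate F V E S \<T>) W'"
    and W'_in: "\<forall>w\<in>W'. \<exists>v j. w = InP v j \<and> layer v = l + 1"
  shows "\<exists>W. regular F V E n layer S (min_rate F V E S \<T>) W
           \<and> (\<forall>w\<in>W. \<exists>v i. w = OutP v i \<and> layer v = l)
           \<and> rank_mat W' W (port_inc F E) = min_rate F V E S \<T>"
proof -
  \<comment> \<open>Only the regularity of \<open>W'\<close> is used: the argument works for any value of \<open>R\<close>, so the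
    destinations and the upper bound on \<open>l\<close> play no role.\<close>
  define R where "R = min_rate F V E S \<T>"
  define P where "P = layer_out_ports layer n l V"
  have fV: "finite V"
    using net unfolding layered_adt_network_def by blast
  then have fP: "finite P"
    unfolding P_def by (rule finite_layer_out_ports)
  have "\<forall>X. X \<subseteq> P \<longrightarrow> R \<le> port_cut_rank F E V n layer l S X + rank_mat W' (P - X) (port_inc F E)"
    using cover_bound_port_cut_rank[OF net] cut_bound_of_regular_in_ports[OF net l(1) reg[folded R_def] W'_in]
    unfolding P_def by blast
  then obtain I where I: "I \<subseteq> P" "card I = R" "port_cut_rank F E V n layer l S I = card I"
      "rank_mat W' I (port_inc F E) = card I"
    using matroid_intersection[OF fP matroid_rank_port_cut_rank[OF net, where F = F and l = l, folded P_def]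
        matroid_rank_rank_mat[OF fP]]
    by blast
  have "R \<le> cut_rank F E V \<Omega> + card (I \<inter> layer_out_ports layer n l \<Omega>)"
    if "\<Omega> \<in> upper_cuts V layer l S" for \<Omega>
    using port_cut_rank_le[OF fV that, of F E n I] I(2,3) by simp
  then have "regular F V E n layer S R I"
    using regular_of_cut_bound[OF net I(1)[unfolded P_def] I(2)] by blast
  moreover have "\<forall>w\<in>I. \<exists>v i. w = OutP v i \<and> layer v = l"
    using I(1) unfolding P_def layer_out_ports_def by blast
  ultimately show ?thesis
    using I(2,4) unfolding R_def by auto
qed

end
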